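(* Let $\varphi:\mathbb{R}\to\mathbb{R}$ be smooth and let $\Sigma$ be a properly immersed $[\varphi,\vec e_3]$-minimal surface in $\mathbb{R}^3$. Suppose there are a constant $B>0$ and a smooth function $\mathcal{G}:[0,+\infty)\to\mathbb{R}$ with $\mathcal{G}(0)>0$, $\mathcal{G}'\ge 0$, $\mathcal{G}^{-1/2}\notin L^1([0,+\infty))$ and $\limsup_{t\to+\infty} t\mathcal{G}(\sqrt t)/\mathcal{G}(t)<+\infty$, such that $|\dot\varphi(\mu(p))|\le B\sqrt{\mathcal{G}(|p|)}$ for all $p\in\Sigma$ outside a compact set. Then the Omori–Yau maximum principle for $\Delta^{\varphi}$ holds on $\Sigma$; in particular $\Sigma$ is $\varphi$-stochastically complete.
   Context: Surfaces are connected, orientable, immersed in $\mathbb{R}^3$, without boundary, with unit normal $N$; $\mu(p)=\langle p,\vec e_3\rangle$, $\eta=\langle N,\vec e_3\rangle$. $\Sigma$ is $[\varphi,\vec e_3]$-minimal if its mean curvature vector $\vec H$ (trace of the second fundamental form) satisfies $\vec H=\dot\varphi(\mu)\eta N$. $\Delta^{\varphi}u=\Delta u+\langle\nabla(\varphi\circ\mu),\nabla u\rangle$ on $\Sigma$ (induced metric). The Omori–Yau maximum principle for $\Delta^\varphi$ holds on $\Sigma$ if for every $u\in C^2(\Sigma)$ with $u^*=\sup_\Sigma u<+\infty$ there is a sequence $p_n$ with $u(p_n)>u^*-1/n$, $|\nabla u(p_n)|<1/n$ and $\Delta^\varphi u(p_n)<1/n$ for all $n$. $\Sigma$ is $\varphi$-stochastically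 complete if the same holds without the gradient condition. *)

theory Defs
  imports "HOL-Analysis.Analysis" "HOL-Analysis.Cross3" "HOL-Library.Liminf_Limsup"
begin

type_synonym R2 = "real \<times> real"

definition pd1 :: "(R2 \<Rightarrow> 'b::real_normed_vector) \<Rightarrow> R2 \<Rightarrow> 'b" where
  "pd1 f z = vector_derivative (\<lambda>t. f (t, snd z)) (at (fst z))"

definition pd2 :: "(R2 \<Rightarrow> 'b::real_normed_vector) \<Rightarrow> R2 \<Rightarrow> 'b" where
  "pd2 f z = vector_derivative (\<lambda>t. f (fst z, t)) (at (snd z))"

fun Ck :: "nat \<Rightarrow> R2 set \<Rightarrow> (R2 \<Rightarrow> 'b::real_normed_vector) \<Rightarrow> bool" where
  "Ck 0 U f = continuous_on U f"
| "Ck (Suc k) U f =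
     (continuous_on U f \<and>
      (\<forall>z\<in>U. (\<lambda>t. f (t, snd z)) differentiable (at (fst z)) \<and>
             (\<lambda>t. f (fst z, t)) differentiable (at (snd z))) \<and>
      Ck k U (pd1 f) \<and> Ck k U (pd2 f))"

definition Cinf :: "R2 set \<Rightarrow> (R2 \<Rightarrow> 'b::real_normed_vector) \<Rightarrow> bool" where
  "Cinf U f \<longleftrightarrow> (\<forall>k. Ck k U f)"

definition g11 :: "(R2 \<Rightarrow> real^3) \<Rightarrow> R2 \<Rightarrow> real" where
  "g11 X z = pd1 X z \<bullet> pd1 X z"
definition g12 :: "(R2 \<Rightarrow> real^3) \<Rightarrow> R2 \<Rightarrow> real" where
  "g12 X z = pd1 X z \<bullet> pd2 X z"
definition g22 :: "(R2 \<Rightarrow> real^3) \<Rightarrow> R2 \<Rightarrow> real" where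
  "g22 X z = pd2 X z \<bullet> pd2 X z"
definition gdet :: "(R2 \<Rightarrow> real^3) \<Rightarrow> R2 \<Rightarrow> real" where
  "gdet X z = g11 X z * g22 X z - (g12 X z)\<^sup>2"

definition ginv11 :: "(R2 \<Rightarrow> real^3) \<Rightarrow> R2 \<Rightarrow> real" where
  "ginv11 X z = g22 X z / gdet X z"
definition ginv12 :: "(R2 \<Rightarrow> real^3) \<Rightarrow> R2 \<Rightarrow> real" where
  "ginv12 X z = - g12 X z / gdet X z"
definition ginv22 :: "(R2 \<Rightarrow> real^3) \<Rightarrow> R2 \<Rightarrow> real" where
  "ginv22 X z = g11 X z / gdet X z"

definition grad_inner_loc :: "(R2 \<Rightarrow> real^3) \<Rightarrow> (R2 \<Rightarrow> real) \<Rightarrow> (R2 \<Rightarrow> real) \<Rightarrow> R2 \<Rightarrow> real" where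
  "grad_inner_loc X a b z =
     ginv11 X z * pd1 a z * pd1 b z
   + ginv12 X z * (pd1 a z * pd2 b z + pd2 a z * pd1 b z)
   + ginv22 X z * pd2 a z * pd2 b z"

definition lap_loc :: "(R2 \<Rightarrow> real^3) \<Rightarrow> (R2 \<Rightarrow> real) \<Rightarrow> R2 \<Rightarrow> real" where
  "lap_loc X f z =
     (1 / sqrt (gdet X z)) *
     ( pd1 (\<lambda>w. sqrt (gdet X w) * (ginv11 X w * pd1 f w + ginv12 X w * pd2 f w)) z
     + pd2 (\<lambda>w. sqrt (gdet X w) * (ginv12 X w * pd1 f w + ginv22 X w * pd2 f w)) z)"

definition normal_loc :: "(R2 \<Rightarrow> real^3) \<Rightarrow> R2 \<Rightarrow> real^3" where
  "normal_loc X z = (1 / norm (cross3 (pd1 X z) (pd2 X z))) *\<^sub>R cross3 (pd1 X z) (pd2 X z)"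

definition meancurv_loc :: "(R2 \<Rightarrow> real^3) \<Rightarrow> R2 \<Rightarrow> real^3" where
  "meancurv_loc X z =
     (ginv11 X z * (pd1 (pd1 X) z \<bullet> normal_loc X z)
    + ginv12 X z * (pd2 (pd1 X) z \<bullet> normal_loc X z)
    + ginv12 X z * (pd1 (pd2 X) z \<bullet> normal_loc X z)
    + ginv22 X z * (pd2 (pd2 X) z \<bullet> normal_loc X z)) *\<^sub>R normal_loc X z"

text \<open>A surface is the type 'a (Hausdorff, second countable), with an atlas A of
 charts (psi, U): U open in R^2, psi a homeomorphism of U onto an open subset of the
 surface, the charts covering the surface; F : 'a \<Rightarrow> R^3 is an immersion, i.e.
 F \<circ> psi is a smooth map of rank 2 on U (this also makes the atlas smooth).
 Orientation / unit normal: the normals computed in overlapping charts agree.\<close>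

definition oriented_immersed_surface ::
  "('a::{t2_space,second_countable_topology} \<Rightarrow> real^3) \<Rightarrow> ((R2 \<Rightarrow> 'a) \<times> R2 set) set \<Rightarrow> bool" where
  "oriented_immersed_surface F A \<longleftrightarrow>
     (\<forall>(\<psi>, U)\<in>A. open U \<and> open (\<psi> ` U) \<and> (\<exists>\<psi>'. homeomorphism U (\<psi> ` U) \<psi> \<psi>') \<and>
        Cinf U (F \<circ> \<psi>) \<and> (\<forall>z\<in>U. cross3 (pd1 (F \<circ> \<psi>) z) (pd2 (F \<circ> \<psi>) z) \<noteq> 0)) \<and>
     (\<forall>p. \<exists>(\<psi>, U)\<in>A. p \<in> \<psi> ` U) \<and>
     (\<forall>(\<psi>1, U1)\<in>A. \<forall>(\<psi>2, U2)\<in>A. \<forall>p \<in> \<psi>1 ` U1 \<inter> \<psi>2 ` U2.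
        normal_loc (F \<circ> \<psi>1) (inv_into U1 \<psi>1 p) = normal_loc (F \<circ> \<psi>2) (inv_into U2 \<psi>2 p))"

definition chart_at :: "((R2 \<Rightarrow> 'a) \<times> R2 set) set \<Rightarrow> 'a \<Rightarrow> (R2 \<Rightarrow> 'a) \<times> R2 set" where
  "chart_at A p = (SOME c. c \<in> A \<and> p \<in> fst c ` snd c)"

definition coord_at :: "((R2 \<Rightarrow> 'a) \<times> R2 set) set \<Rightarrow> 'a \<Rightarrow> R2" where
  "coord_at A p = inv_into (snd (chart_at A p)) (fst (chart_at A p)) p"

text \<open>Global quantities, computed in a chart around p (they are chart independent).\<close>

definition unit_normal :: "('a \<Rightarrow> real^3) \<Rightarrow> ((R2 \<Rightarrow> 'a) \<times> R2 set) set \<Rightarrow> 'a \<Rightarrow> real^3" where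
  "unit_normal F A p = normal_loc (F \<circ> fst (chart_at A p)) (coord_at A p)"

definition mean_curvature_vector :: "('a \<Rightarrow> real^3) \<Rightarrow> ((R2 \<Rightarrow> 'a) \<times> R2 set) set \<Rightarrow> 'a \<Rightarrow> real^3" where
  "mean_curvature_vector F A p = meancurv_loc (F \<circ> fst (chart_at A p)) (coord_at A p)"

definition grad_inner :: "('a \<Rightarrow> real^3) \<Rightarrow> ((R2 \<Rightarrow> 'a) \<times> R2 set) set \<Rightarrow> ('a \<Rightarrow> real) \<Rightarrow> ('a \<Rightarrow> real) \<Rightarrow> 'a \<Rightarrow> real" where
  "grad_inner F A u v p =
     grad_inner_loc (F \<circ> fst (chart_at A p)) (u \<circ> fst (chart_at A p)) (v \<circ> fst (chart_at A p)) (coord_at A p)"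

definition grad_norm :: "('a \<Rightarrow> real^3) \<Rightarrow> ((R2 \<Rightarrow> 'a) \<times> R2 set) set \<Rightarrow> ('a \<Rightarrow> real) \<Rightarrow> 'a \<Rightarrow> real" where
  "grad_norm F A u p = sqrt (grad_inner F A u u p)"

definition laplacian :: "('a \<Rightarrow> real^3) \<Rightarrow> ((R2 \<Rightarrow> 'a) \<times> R2 set) set \<Rightarrow> ('a \<Rightarrow> real) \<Rightarrow> 'a \<Rightarrow> real" where
  "laplacian F A u p = lap_loc (F \<circ> fst (chart_at A p)) (u \<circ> fst (chart_at A p)) (coord_at A p)"

definition e3 :: "real^3" where "e3 = axis 3 1"

definition height :: "('a \<Rightarrow> real^3) \<Rightarrow> 'a \<Rightarrow> real" where
  "height F p = F p \<bullet> e3"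

definition phi_laplacian :: "(real \<Rightarrow> real) \<Rightarrow> ('a \<Rightarrow> real^3) \<Rightarrow> ((R2 \<Rightarrow> 'a) \<times> R2 set) set \<Rightarrow> ('a \<Rightarrow> real) \<Rightarrow> 'a \<Rightarrow> real" where
  "phi_laplacian \<phi> F A u p = laplacian F A u p + grad_inner F A (\<phi> \<circ> height F) u p"

definition C2_surface :: "((R2 \<Rightarrow> 'a) \<times> R2 set) set \<Rightarrow> ('a \<Rightarrow> real) \<Rightarrow> bool" where
  "C2_surface A u \<longleftrightarrow> (\<forall>(\<psi>, U)\<in>A. Ck 2 U (u \<circ> \<psi>))"

definition phi_minimal :: "(real \<Rightarrow> real) \<Rightarrow> ('a \<Rightarrow> real^3) \<Rightarrow> ((R2 \<Rightarrow> 'a) \<times> R2 set) set \<Rightarrow> bool" where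
  "phi_minimal \<phi> F A \<longleftrightarrow>
     (\<forall>p. mean_curvature_vector F A p =
          (deriv \<phi> (height F p) * (unit_normal F A p \<bullet> e3)) *\<^sub>R unit_normal F A p)"

definition omori_yau_phi :: "(real \<Rightarrow> real) \<Rightarrow> ('a \<Rightarrow> real^3) \<Rightarrow> ((R2 \<Rightarrow> 'a) \<times> R2 set) set \<Rightarrow> bool" where
  "omori_yau_phi \<phi> F A \<longleftrightarrow>
     (\<forall>u. C2_surface A u \<and> bdd_above (range u) \<longrightarrow>
        (\<exists>p :: nat \<Rightarrow> 'a. \<forall>n::nat. n \<ge> 1 \<longrightarrow>
            u (p n) > (SUP q. u q) - 1 / real n \<and>
            grad_norm F A u (p n) < 1 / real n \<and>
            phi_laplacian \<phi> F A u (p n) < 1 / real n))"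

definition phi_stochastically_complete :: "(real \<Rightarrow> real) \<Rightarrow> ('a \<Rightarrow> real^3) \<Rightarrow> ((R2 \<Rightarrow> 'a) \<times> R2 set) set \<Rightarrow> bool" where
  "phi_stochastically_complete \<phi> F A \<longleftrightarrow>
     (\<forall>u. C2_surface A u \<and> bdd_above (range u) \<longrightarrow>
        (\<exists>p :: nat \<Rightarrow> 'a. \<forall>n::nat. n \<ge> 1 \<longrightarrow>
            u (p n) > (SUP q. u q) - 1 / real n \<and>
            phi_laplacian \<phi> F A u (p n) < 1 / real n))"

definition smooth_real :: "(real \<Rightarrow> real) \<Rightarrow> bool" where
  "smooth_real f \<longleftrightarrow> (\<forall>n x. ((deriv ^^ n) f) differentiable (at x))"

text \<open>Smooth on [0,\<infinity>): derivatives of all orders exist (one-sided at 0); D k is the k-th derivative.\<close>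
definition smooth_on_halfline :: "(real \<Rightarrow> real) \<Rightarrow> (nat \<Rightarrow> real \<Rightarrow> real) \<Rightarrow> bool" where
  "smooth_on_halfline f D \<longleftrightarrow>
     (\<forall>t\<ge>0. D 0 t = f t) \<and>
     (\<forall>k. \<forall>t\<ge>0. (D k has_real_derivative D (Suc k) t) (at t within {0..}))"

end

theory Submission
  imports Defs
begin

text \<open>The proof is a maximum principle argument with an exhaustion function.
  Put \<Psi>(s) = \<integral>_0^{\<surd>s} G^{-1/2} and \<Theta> = \<Psi>(1 + |F|^2). Since G^{-1/2} is not
  integrable, \<Theta> is proper on the properly immersed surface, so for every \<epsilon> > 0 the
  function u - \<epsilon>\<Theta> attains its maximum at some point q, where \<nabla>u = \<epsilon>\<nabla>\<Theta> and
  \<Delta>^\<phi> u \<le> \<epsilon>\<Delta>^\<phi> \<Theta>. On a [\<phi>,e3]-minimal surface the normal components of the mean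
  curvature and of the drift cancel, giving \<Delta>^\<phi> |F|^2 = 4 + 2 \<phi>'(\<mu>) \<mu>; with \<Psi>
  concave, 2\<surd>s \<Psi>'(s) = G(\<surd>s)^{-1/2} and |\<phi>'(\<mu>)| \<le> B G(|F|)^{1/2}, both |\<nabla>\<Theta>| and
  \<Delta>^\<phi> \<Theta> are bounded independently of \<epsilon>. Letting \<epsilon> \<rightarrow> 0 along a sequence gives
  the Omori--Yau sequence.\<close>

section \<open>Jet formulas for the Laplace--Beltrami operator\<close>

lemma cross3_inner_self:
  fixes a b :: "real^3"
  shows "cross3 a b \<bullet> cross3 a b = (a\<bullet>a)*(b\<bullet>b) - (a\<bullet>b)^2"
  by (simp add: dot_cross power2_eq_square inner_commute)

lemma cross3_frame_expansion:
  fixes a b v :: "real^3"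
  defines "n \<equiv> cross3 a b"
  shows "((a\<bullet>a)*(b\<bullet>b) - (a\<bullet>b)^2) *\<^sub>R v =
     (v\<bullet>a) *\<^sub>R ((b\<bullet>b) *\<^sub>R a - (a\<bullet>b) *\<^sub>R b) + (v\<bullet>b) *\<^sub>R ((a\<bullet>a) *\<^sub>R b - (a\<bullet>b) *\<^sub>R a)
     + (v\<bullet>n) *\<^sub>R n"
  unfolding n_def
  by (simp add: cross3_def inner_vec_def sum_3 vector_def vec_eq_iff forall_3 power2_eq_square) algebra

lemma cross3_frame_inner:
  fixes a b v w :: "real^3"
  shows "((a\<bullet>a)*(b\<bullet>b) - (a\<bullet>b)^2) * (v\<bullet>w) =
    (v\<bullet>a)*((b\<bullet>b)*(a\<bullet>w) - (a\<bullet>b)*(b\<bullet>w)) + (v\<bullet>b)*((a\<bullet>a)*(b\<bullet>w) - (a\<bullet>b)*(a\<bullet>w))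
    + (v\<bullet>cross3 a b)*(cross3 a b\<bullet>w)"
proof -
  have "(((a\<bullet>a)*(b\<bullet>b) - (a\<bullet>b)^2) *\<^sub>R v) \<bullet> w =
     ((v\<bullet>a) *\<^sub>R ((b\<bullet>b) *\<^sub>R a - (a\<bullet>b) *\<^sub>R b) + (v\<bullet>b) *\<^sub>R ((a\<bullet>a) *\<^sub>R b - (a\<bullet>b) *\<^sub>R a)
     + (v\<bullet>cross3 a b) *\<^sub>R cross3 a b) \<bullet> w" by (subst cross3_frame_expansion) simp
  thus ?thesis by (simp only: inner_add_left inner_diff_left inner_scaleR_left)
qed

lemma gram_det_pos:
  fixes a b :: "real^3"
  assumes "cross3 a b \<noteq> 0"
  shows "(a\<bullet>a)*(b\<bullet>b) - (a\<bullet>b)^2 > 0" "a\<bullet>a > 0"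
proof -
  have "cross3 a b \<bullet> cross3 a b > 0" using assms by simp
  thus "(a\<bullet>a)*(b\<bullet>b) - (a\<bullet>b)^2 > 0" by (simp only: cross3_inner_self)
  have "a \<noteq> 0" using assms by auto
  thus "a\<bullet>a > 0" by simp
qed

text \<open>Jets at a point of a chart X and of a function f: a = X_x, b = X_y, a1 = X_xx,
  b1 = X_yx, a2 = X_xy, b2 = X_yy, and p = f_x, q = f_y, p1 = f_xx, q1 = f_yx, p2 = f_xy,
  q2 = f_yy. Then lap_jet is the Laplace--Beltrami operator of f, jet_inner the induced
  inner product of gradients, and lap_jet_vec is \<Delta>X.\<close>

definition lap_jet :: "real^3 \<Rightarrow> real^3 \<Rightarrow> real^3 \<Rightarrow> real^3 \<Rightarrow> real^3 \<Rightarrow> real^3 \<Rightarrow>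
   real \<Rightarrow> real \<Rightarrow> real \<Rightarrow> real \<Rightarrow> real \<Rightarrow> real \<Rightarrow> real" where
 "lap_jet a b a1 b1 a2 b2 p q p1 q1 p2 q2 =
   ((2*(b\<bullet>b1)*p + (b\<bullet>b)*p1 - (a1\<bullet>b + a\<bullet>b1)*q - (a\<bullet>b)*q1
     + 2*(a\<bullet>a2)*q + (a\<bullet>a)*q2 - (a2\<bullet>b + a\<bullet>b2)*p - (a\<bullet>b)*p2) / ((a\<bullet>a)*(b\<bullet>b) - (a\<bullet>b)^2)
   - (((b\<bullet>b)*p - (a\<bullet>b)*q) * (2*(a\<bullet>a1)*(b\<bullet>b) + (a\<bullet>a)*(2*(b\<bullet>b1)) - 2*(a\<bullet>b)*(a1\<bullet>b + a\<bullet>b1))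
     + ((a\<bullet>a)*q - (a\<bullet>b)*p) * (2*(a\<bullet>a2)*(b\<bullet>b) + (a\<bullet>a)*(2*(b\<bullet>b2)) - 2*(a\<bullet>b)*(a2\<bullet>b + a\<bullet>b2)))
     / (2*((a\<bullet>a)*(b\<bullet>b) - (a\<bullet>b)^2)^2))"

definition jet_inner :: "real^3 \<Rightarrow> real^3 \<Rightarrow> real \<Rightarrow> real \<Rightarrow> real \<Rightarrow> real \<Rightarrow> real" where
  "jet_inner a b p q p' q' =
     ((b\<bullet>b)*p*p' - (a\<bullet>b)*(p*q' + q*p') + (a\<bullet>a)*q*q') / ((a\<bullet>a)*(b\<bullet>b) - (a\<bullet>b)^2)"

definition lap_jet_vec :: "real^3 \<Rightarrow> real^3 \<Rightarrow> real^3 \<Rightarrow> real^3 \<Rightarrow> real^3 \<Rightarrow> real^3 \<Rightarrow> real^3" where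
 "lap_jet_vec a b a1 b1 a2 b2 =
   (1 / ((a\<bullet>a)*(b\<bullet>b) - (a\<bullet>b)^2)) *\<^sub>R
   ((2*(b\<bullet>b1)) *\<^sub>R a + (b\<bullet>b) *\<^sub>R a1 - (a1\<bullet>b + a\<bullet>b1) *\<^sub>R b - (a\<bullet>b) *\<^sub>R b1
     + (2*(a\<bullet>a2)) *\<^sub>R b + (a\<bullet>a) *\<^sub>R b2 - (a2\<bullet>b + a\<bullet>b2) *\<^sub>R a - (a\<bullet>b) *\<^sub>R a2)
   - (1 / (2*((a\<bullet>a)*(b\<bullet>b) - (a\<bullet>b)^2)^2)) *\<^sub>R
   ((2*(a\<bullet>a1)*(b\<bullet>b) + (a\<bullet>a)*(2*(b\<bullet>b1)) - 2*(a\<bullet>b)*(a1\<bullet>b + a\<bullet>b1)) *\<^sub>R ((b\<bullet>b) *\<^sub>R a - (a\<bullet>b) *\<^sub>R b)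
     + (2*(a\<bullet>a2)*(b\<bullet>b) + (a\<bullet>a)*(2*(b\<bullet>b2)) - 2*(a\<bullet>b)*(a2\<bullet>b + a\<bullet>b2)) *\<^sub>R ((a\<bullet>a) *\<^sub>R b - (a\<bullet>b) *\<^sub>R a))"

lemma lap_jet_split:
  "lap_jet a b a1 b1 a2 b2 p q p1 q1 p2 q2 =
    ((b\<bullet>b)*p1 - (a\<bullet>b)*(q1+p2) + (a\<bullet>a)*q2) / ((a\<bullet>a)*(b\<bullet>b) - (a\<bullet>b)^2)
    + lap_jet a b a1 b1 a2 b2 1 0 0 0 0 0 * p + lap_jet a b a1 b1 a2 b2 0 1 0 0 0 0 * q"
  unfolding lap_jet_def by (simp add: add_divide_distrib diff_divide_distrib algebra_simps)

lemma lap_jet_add_scaled: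
  "lap_jet a b a1 b1 a2 b2 (p + c*p') (q + c*q') (p1 + c*p1') (q1 + c*q1') (p2 + c*p2') (q2 + c*q2')
   = lap_jet a b a1 b1 a2 b2 p q p1 q1 p2 q2 + c * lap_jet a b a1 b1 a2 b2 p' q' p1' q1' p2' q2'"
proof -
  define la where "la = lap_jet a b a1 b1 a2 b2 1 0 0 0 0 0"
  define lb where "lb = lap_jet a b a1 b1 a2 b2 0 1 0 0 0 0"
  define D where "D = (a\<bullet>a)*(b\<bullet>b) - (a\<bullet>b)^2"
  have S: "\<And>p q p1 q1 p2 q2. lap_jet a b a1 b1 a2 b2 p q p1 q1 p2 q2 =
      ((b\<bullet>b)*p1 - (a\<bullet>b)*(q1+p2) + (a\<bullet>a)*q2) / D + la * p + lb * q"
    unfolding la_def lb_def D_def by (rule lap_jet_split)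
  show ?thesis unfolding S
    by (cases "D = 0") (simp_all add: field_simps)
qed

lemma lap_jet_chain:
  "lap_jet a b a1 b1 a2 b2 (k1*u1) (k1*u2) (k2*u1*u1 + k1*u11) (k2*u1*u2 + k1*u21) (k2*u2*u1 + k1*u12) (k2*u2*u2 + k1*u22)
   = k2 * jet_inner a b u1 u2 u1 u2 + k1 * lap_jet a b a1 b1 a2 b2 u1 u2 u11 u21 u12 u22"
proof -
  define la where "la = lap_jet a b a1 b1 a2 b2 1 0 0 0 0 0"
  define lb where "lb = lap_jet a b a1 b1 a2 b2 0 1 0 0 0 0"
  define D where "D = (a\<bullet>a)*(b\<bullet>b) - (a\<bullet>b)^2"
  have S: "\<And>p q p1 q1 p2 q2. lap_jet a b a1 b1 a2 b2 p q p1 q1 p2 q2 =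
      ((b\<bullet>b)*p1 - (a\<bullet>b)*(q1+p2) + (a\<bullet>a)*q2) / D + la * p + lb * q"
    unfolding la_def lb_def D_def by (rule lap_jet_split)
  show ?thesis unfolding S jet_inner_def D_def[symmetric]
    by (cases "D = 0") (simp_all add: field_simps)
qed

lemma lap_jet_inner_const:
  "lap_jet a b a1 b1 a2 b2 (v\<bullet>a) (v\<bullet>b) (v\<bullet>a1) (v\<bullet>b1) (v\<bullet>a2) (v\<bullet>b2) = v \<bullet> lap_jet_vec a b a1 b1 a2 b2"
  unfolding lap_jet_def lap_jet_vec_def
  by (simp add: algebra_simps add_divide_distrib diff_divide_distrib)

lemma div_diff_div_square_eq_0:
  fixes D x y :: real
  shows "D \<noteq> 0 \<Longrightarrow> 2*D*x = y \<Longrightarrow> (1/D)*x - (1/(2*D^2))*y = 0"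
  by (simp add: field_simps power2_eq_square)

lemma lap_jet_vec_orthogonal_a:
  assumes "cross3 a b \<noteq> 0"
  shows "lap_jet_vec a b a1 b1 b1 b2 \<bullet> a = 0"
proof -
  have D: "(a\<bullet>a)*(b\<bullet>b) - (a\<bullet>b)^2 \<noteq> 0" using gram_det_pos[OF assms] by simp
  show ?thesis unfolding lap_jet_vec_def inner_diff_left[of _ _ a] inner_scaleR_left
    apply (rule div_diff_div_square_eq_0[OF D])
    apply (simp only: inner_add_left inner_diff_left inner_scaleR_left)
    apply (simp only: inner_commute[of b a] inner_commute[of a1 a] inner_commute[of b1 a] inner_commute[of b2 a] inner_commute[of b1 b])
    apply (simp add: power2_eq_square)
    apply algebra
    done
qed

lemma lap_jet_vec_orthogonal_b:
  assumes "cross3 a b \<noteq> 0"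
  shows "lap_jet_vec a b a1 b1 b1 b2 \<bullet> b = 0"
proof -
  have D: "(a\<bullet>a)*(b\<bullet>b) - (a\<bullet>b)^2 \<noteq> 0" using gram_det_pos[OF assms] by simp
  show ?thesis unfolding lap_jet_vec_def inner_diff_left[of _ _ b] inner_scaleR_left
    apply (rule div_diff_div_square_eq_0[OF D])
    apply (simp only: inner_add_left inner_diff_left inner_scaleR_left)
    apply (simp only: inner_commute[of b a] inner_commute[of b1 b] inner_commute[of b2 b])
    apply (simp add: power2_eq_square)
    apply algebra
    done
qed

lemma lap_jet_vec_inner_cross3:
  "lap_jet_vec a b a1 b1 b1 b2 \<bullet> cross3 a b =
    ((b\<bullet>b)*(a1 \<bullet> cross3 a b) - 2*(a\<bullet>b)*(b1 \<bullet> cross3 a b) + (a\<bullet>a)*(b2 \<bullet> cross3 a b))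
     / ((a\<bullet>a)*(b\<bullet>b) - (a\<bullet>b)^2)"
  unfolding lap_jet_vec_def inner_diff_left[of _ _ "cross3 a b"] inner_scaleR_left
  by (simp only: inner_add_left inner_diff_left inner_scaleR_left dot_cross_self) (simp add: field_simps)

text \<open>The coefficients are g^11, g^12, g^12, g^22, as in meancurv_loc.\<close>

lemma lap_jet_vec_normal:
  assumes nz: "cross3 a b \<noteq> 0"
  defines "N \<equiv> (1 / norm (cross3 a b)) *\<^sub>R cross3 a b"
  defines "D \<equiv> (a\<bullet>a)*(b\<bullet>b) - (a\<bullet>b)^2"
  shows "lap_jet_vec a b a1 b1 b1 b2 =
     ((b\<bullet>b)/D * (a1 \<bullet> N) + (- (a\<bullet>b))/D * (b1 \<bullet> N) + (- (a\<bullet>b))/D * (b1 \<bullet> N) + (a\<bullet>a)/D * (b2 \<bullet> N)) *\<^sub>R N"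
proof -
  let ?n = "cross3 a b" and ?T = "lap_jet_vec a b a1 b1 b1 b2"
  have Dpos: "D > 0" using gram_det_pos[OF nz] unfolding D_def by simp
  have nrm: "norm ?n ^2 = D" using cross3_inner_self[of a b] unfolding D_def by (simp add: power2_norm_eq_inner)
  have nrm0: "norm ?n > 0" using nz by simp
  have nrm2: "\<And>x. norm ?n * (norm ?n * x) = D * x" using nrm by (simp add: power2_eq_square mult.assoc[symmetric])
  have "D *\<^sub>R ?T = (?T \<bullet> ?n) *\<^sub>R ?n"
    using cross3_frame_expansion[of a b ?T] lap_jet_vec_orthogonal_a[OF nz] lap_jet_vec_orthogonal_b[OF nz]
    unfolding D_def by simp
  hence "(1/D) *\<^sub>R (D *\<^sub>R ?T) = ((?T \<bullet> ?n) / D) *\<^sub>R ?n" by simp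
  hence "?T = ((?T \<bullet> ?n) / D) *\<^sub>R ?n" using Dpos by simp
  also have "\<dots> = (((b\<bullet>b)*(a1 \<bullet> ?n) - 2*(a\<bullet>b)*(b1 \<bullet> ?n) + (a\<bullet>a)*(b2 \<bullet> ?n)) / (D*D)) *\<^sub>R ?n"
    using lap_jet_vec_inner_cross3 unfolding D_def by simp
  also have "\<dots> = ((b\<bullet>b)/D * (a1 \<bullet> N) + (- (a\<bullet>b))/D * (b1 \<bullet> N) + (- (a\<bullet>b))/D * (b1 \<bullet> N) + (a\<bullet>a)/D * (b2 \<bullet> N)) *\<^sub>R N"
    unfolding N_def using nrm nrm0 Dpos
    by (simp add: field_simps power2_eq_square) (simp add: nrm2 algebra_simps)
  finally show ?thesis .
qed

lemma jet_inner_tangential: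
  fixes a b v w :: "real^3"
  assumes "cross3 a b \<noteq> 0"
  shows "jet_inner a b (v\<bullet>a) (v\<bullet>b) (w\<bullet>a) (w\<bullet>b) =
    (v\<bullet>w) - (v\<bullet>cross3 a b) * (w\<bullet>cross3 a b) / ((a\<bullet>a)*(b\<bullet>b) - (a\<bullet>b)^2)"
proof -
  have "(b\<bullet>b)*(v\<bullet>a)*(w\<bullet>a) - (a\<bullet>b)*((v\<bullet>a)*(w\<bullet>b) + (v\<bullet>b)*(w\<bullet>a)) + (a\<bullet>a)*(v\<bullet>b)*(w\<bullet>b)
      = ((a\<bullet>a)*(b\<bullet>b) - (a\<bullet>b)^2) * (v\<bullet>w) - (v\<bullet>cross3 a b) * (w\<bullet>cross3 a b)"
    unfolding cross3_frame_inner by (simp add: inner_commute algebra_simps)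
  thus ?thesis unfolding jet_inner_def using gram_det_pos[OF assms] by (simp add: field_simps)
qed

lemma jet_inner_nonneg:
  fixes a b :: "real^3"
  assumes "cross3 a b \<noteq> 0"
  shows "jet_inner a b p q p q \<ge> 0"
proof -
  define E where "E = a\<bullet>a"
  define D where "D = (a\<bullet>a)*(b\<bullet>b) - (a\<bullet>b)^2"
  have "E * ((b\<bullet>b)*p*p - (a\<bullet>b)*(p*q + q*p) + E*q*q) = (E*q - (a\<bullet>b)*p)^2 + D*p^2"
    unfolding D_def E_def by (simp add: algebra_simps power2_eq_square)
  also have "\<dots> \<ge> 0" using gram_det_pos[OF assms] unfolding D_def by simp
  finally show ?thesis using gram_det_pos[OF assms] unfolding jet_inner_def E_def[symmetric]
    by (simp add: zero_le_mult_iff)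
qed

lemma trace_nonpos_of_neg_semidef:
  fixes E F G D p1 q1 p2 q2 :: real
  assumes "E > 0" "D = E*G - F^2" "D > 0"
    and Q: "\<And>v1 v2. v1 * (v1 * p1 + v2 * p2) + v2 * (v1 * q1 + v2 * q2) \<le> 0"
  shows "(G*p1 - F*(q1+p2) + E*q2) / D \<le> 0"
proof -
  have "E * (G*p1 - F*(q1+p2) + E*q2) = D * (1 * (1 * p1 + 0 * p2) + 0 * (1 * q1 + 0 * q2))
        + (F * (F * p1 + (-E) * p2) + (-E) * (F * q1 + (-E) * q2))"
    unfolding assms(2) by (simp add: algebra_simps power2_eq_square)
  also have "\<dots> \<le> 0" using Q[of 1 0] Q[of F "-E"] assms(3)
    by (smt (verit) mult_nonneg_nonpos)
  finally have "E * (G*p1 - F*(q1+p2) + E*q2) \<le> 0" .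
  hence "G*p1 - F*(q1+p2) + E*q2 \<le> 0" using assms(1) by (simp add: mult_le_0_iff)
  thus ?thesis using assms(3) by (simp add: divide_nonpos_pos)
qed

lemma lap_jet_nonpos_of_neg_semidef:
  assumes nz: "cross3 a b \<noteq> 0"
    and Q: "\<And>v1 v2. v1 * (v1 * m11 + v2 * m12) + v2 * (v1 * m21 + v2 * m22) \<le> 0"
  shows "lap_jet a b a1 b1 b1 b2 0 0 m11 m21 m12 m22 \<le> 0"
proof -
  have "lap_jet a b a1 b1 b1 b2 0 0 m11 m21 m12 m22
      = ((b\<bullet>b)*m11 - (a\<bullet>b)*(m21+m12) + (a\<bullet>a)*m22) / ((a\<bullet>a)*(b\<bullet>b) - (a\<bullet>b)^2)"
    unfolding lap_jet_split[of a b a1 b1 b1 b2 0 0] by simp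
  also have "\<dots> \<le> 0" using gram_det_pos[OF nz] Q by (intro trace_nonpos_of_neg_semidef) auto
  finally show ?thesis .
qed

lemma jet_inner_scale:
  "jet_inner a b (c*p) (c*q) (d*p') (d*q') = c * d * jet_inner a b p q p' q'"
  unfolding jet_inner_def by (simp add: algebra_simps)

lemma jet_inner_norm_sq_le:
  fixes a b v :: "real^3"
  assumes "cross3 a b \<noteq> 0"
  shows "jet_inner a b (v\<bullet>a) (v\<bullet>b) (v\<bullet>a) (v\<bullet>b) \<le> v \<bullet> v"
  using gram_det_pos[OF assms] unfolding jet_inner_tangential[OF assms] by simp

lemma lap_jet_norm_sq:
  assumes nz: "cross3 a b \<noteq> 0"
  shows "lap_jet a b a1 b1 b1 b2 (2*(v\<bullet>a)) (2*(v\<bullet>b)) (2*(a\<bullet>a + v\<bullet>a1)) (2*(a\<bullet>b + v\<bullet>b1))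
      (2*(b\<bullet>a + v\<bullet>b1)) (2*(b\<bullet>b + v\<bullet>b2))
    = 4 + 2 * (v \<bullet> lap_jet_vec a b a1 b1 b1 b2)"
proof -
  have D: "(a\<bullet>a)*(b\<bullet>b) - (a\<bullet>b)^2 \<noteq> 0" using gram_det_pos[OF nz] by simp
  have "lap_jet a b a1 b1 b1 b2 (2*(v\<bullet>a)) (2*(v\<bullet>b)) (2*(a\<bullet>a + v\<bullet>a1)) (2*(a\<bullet>b + v\<bullet>b1))
      (2*(b\<bullet>a + v\<bullet>b1)) (2*(b\<bullet>b + v\<bullet>b2))
    = lap_jet a b a1 b1 b1 b2 (0 + 2*(v\<bullet>a)) (0 + 2*(v\<bullet>b)) (2*(a\<bullet>a) + 2*(v\<bullet>a1))
      (2*(a\<bullet>b) + 2*(v\<bullet>b1)) (2*(b\<bullet>a) + 2*(v\<bullet>b1)) (2*(b\<bullet>b) + 2*(v\<bullet>b2))"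
    by (simp add: distrib_left)
  also have "\<dots> = lap_jet a b a1 b1 b1 b2 0 0 (2*(a\<bullet>a)) (2*(a\<bullet>b)) (2*(b\<bullet>a)) (2*(b\<bullet>b))
      + 2 * lap_jet a b a1 b1 b1 b2 (v\<bullet>a) (v\<bullet>b) (v\<bullet>a1) (v\<bullet>b1) (v\<bullet>b1) (v\<bullet>b2)"
    by (rule lap_jet_add_scaled)
  also have "lap_jet a b a1 b1 b1 b2 0 0 (2*(a\<bullet>a)) (2*(a\<bullet>b)) (2*(b\<bullet>a)) (2*(b\<bullet>b)) = 4"
    unfolding lap_jet_split[of a b a1 b1 b1 b2 0 0] using D
    by (simp add: inner_commute[of b a] field_simps power2_eq_square)
  finally show ?thesis by (simp add: lap_jet_inner_const)
qed

text \<open>Pointwise form of \<Delta>|X|^2 + \<langle>\<nabla>(c \<langle>X, e\<rangle>), \<nabla>|X|^2\<rangle> = 4 + 2 c \<langle>X, e\<rangle> when the mean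
  curvature vector is c \<langle>N, e\<rangle> N: the normal parts of the two terms on the left cancel.\<close>

lemma drift_lap_jet_norm_sq:
  fixes a b v e :: "real^3"
  assumes nz: "cross3 a b \<noteq> 0"
    and H: "lap_jet_vec a b a1 b1 b1 b2 = (c * (N \<bullet> e)) *\<^sub>R N"
    and N: "N = (1 / norm (cross3 a b)) *\<^sub>R cross3 a b"
  shows "lap_jet a b a1 b1 b1 b2 (2*(v\<bullet>a)) (2*(v\<bullet>b)) (2*(a\<bullet>a + v\<bullet>a1)) (2*(a\<bullet>b + v\<bullet>b1))
      (2*(b\<bullet>a + v\<bullet>b1)) (2*(b\<bullet>b + v\<bullet>b2))
    + jet_inner a b (c*(e\<bullet>a)) (c*(e\<bullet>b)) (2*(v\<bullet>a)) (2*(v\<bullet>b)) = 4 + 2 * c * (v \<bullet> e)"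
proof -
  let ?n = "cross3 a b" and ?D = "(a\<bullet>a)*(b\<bullet>b) - (a\<bullet>b)^2"
  have nn: "norm ?n ^ 2 = ?D" using cross3_inner_self[of a b] by (simp add: power2_norm_eq_inner)
  have "v \<bullet> lap_jet_vec a b a1 b1 b1 b2 = c * (e \<bullet> ?n) * (v \<bullet> ?n) / ?D"
    unfolding H N using nz nn by (simp add: inner_commute[of e] field_simps power2_eq_square)
  moreover have "jet_inner a b (c*(e\<bullet>a)) (c*(e\<bullet>b)) (2*(v\<bullet>a)) (2*(v\<bullet>b))
      = c * 2 * ((e \<bullet> v) - (e \<bullet> ?n) * (v \<bullet> ?n) / ?D)"
    unfolding jet_inner_scale jet_inner_tangential[OF nz] ..
  ultimately show ?thesis unfolding lap_jet_norm_sq[OF nz] by (simp add: inner_commute algebra_simps)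
qed

section \<open>Calculus in the plane\<close>

lemma DERIV_inner:
  fixes A B :: "real \<Rightarrow> real^3"
  assumes "(A has_vector_derivative A') (at t0)" "(B has_vector_derivative B') (at t0)"
  shows "((\<lambda>t. A t \<bullet> B t) has_real_derivative (A' \<bullet> B t0 + A t0 \<bullet> B')) (at t0)"
proof -
  have "((\<lambda>t. A t \<bullet> B t) has_derivative (\<lambda>h. A t0 \<bullet> (h *\<^sub>R B') + (h *\<^sub>R A') \<bullet> B t0)) (at t0)"
    using assms unfolding has_vector_derivative_def by (intro derivative_eq_intros) auto
  thus ?thesis unfolding has_field_derivative_def
    by (rule has_derivative_eq_rhs) (auto simp: algebra_simps inner_commute)
qed

lemma DERIV_mult_both:
  "(f has_real_derivative Da) (at x) \<Longrightarrow> (g has_real_derivative Db) (at x) \<Longrightarrow>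
   ((\<lambda>x. f x * g x) has_real_derivative Da * g x + f x * Db) (at x)"
  using DERIV_mult'[of f Da x UNIV g Db] by (simp add: algebra_simps)

definition quot_sqrt_deriv :: "real \<Rightarrow> real \<Rightarrow> real \<Rightarrow> real \<Rightarrow> real \<Rightarrow> real \<Rightarrow> real \<Rightarrow> real \<Rightarrow> real \<Rightarrow> real \<Rightarrow> real" where
  "quot_sqrt_deriv U' P U P' V' Q V Q' W W' = (U'*P + U*P' - V'*Q - V*Q')/sqrt W - (U*P - V*Q)*W'/(2*W* sqrt W)"

lemma DERIV_quotient_sqrt:
  fixes U V W P Q :: "real \<Rightarrow> real"
  assumes "(U has_real_derivative U') (at t0)" "(V has_real_derivative V') (at t0)"
    "(W has_real_derivative W') (at t0)" "(P has_real_derivative P') (at t0)"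
    "(Q has_real_derivative Q') (at t0)" "W t0 > 0"
  shows "((\<lambda>t. (U t * P t - V t * Q t) / sqrt (W t)) has_real_derivative
     quot_sqrt_deriv U' (P t0) (U t0) P' V' (Q t0) (V t0) Q' (W t0) W') (at t0)"
proof -
  have s: "sqrt (W t0) > 0" using assms(6) by simp
  have ss2: "\<And>x. sqrt (W t0) * (sqrt (W t0) * x) = W t0 * x"
    using assms(6) by (simp add: mult.assoc[symmetric])
  have "((\<lambda>t. (U t * P t - V t * Q t) / sqrt (W t)) has_real_derivative
     ((U' * P t0 + U t0 * P' - (V' * Q t0 + V t0 * Q')) * sqrt (W t0)
      - (U t0 * P t0 - V t0 * Q t0) * (inverse (sqrt (W t0)) / 2 * W')) / (sqrt (W t0) * sqrt (W t0))) (at t0)"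
    using assms s
    by (intro DERIV_divide DERIV_diff DERIV_mult_both DERIV_add DERIV_chain2[OF DERIV_real_sqrt]) auto
  moreover have "((U' * P t0 + U t0 * P' - (V' * Q t0 + V t0 * Q')) * sqrt (W t0)
      - (U t0 * P t0 - V t0 * Q t0) * (inverse (sqrt (W t0)) / 2 * W')) / (sqrt (W t0) * sqrt (W t0))
    = ((U' * P t0 + U t0 * P' - V' * Q t0 - V t0 * Q') / sqrt (W t0)
      - (U t0 * P t0 - V t0 * Q t0) * W' / (2 * W t0 * sqrt (W t0)))"
    using s assms(6) by (simp add: field_simps) (simp add: ss2)
  ultimately show ?thesis unfolding quot_sqrt_deriv_def by simp
qed

lemma lap_jet_divergence_form:
  fixes aa ab bb aa1 a1b ab1 bb1 aa2 a2b ab2 bb2 p q p1 q1 p2 q2 :: real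
  assumes "D = aa*bb - ab^2" "D > 0"
  shows "(1/sqrt D) * (quot_sqrt_deriv (bb1+bb1) p bb p1 (a1b+ab1) q ab q1 D ((aa1+aa1)*bb + aa*(bb1+bb1) - 2*ab*(a1b+ab1))
          + quot_sqrt_deriv (aa2+aa2) q aa q2 (a2b+ab2) p ab p2 D ((aa2+aa2)*bb + aa*(bb2+bb2) - 2*ab*(a2b+ab2)))
    = ((2*bb1*p + bb*p1 - (a1b + ab1)*q - ab*q1
     + 2*aa2*q + aa*q2 - (a2b + ab2)*p - ab*p2) / (aa*bb - ab^2)
   - ((bb*p - ab*q) * (2*aa1*bb + aa*(2*bb1) - 2*ab*(a1b + ab1))
     + (aa*q - ab*p) * (2*aa2*bb + aa*(2*bb2) - 2*ab*(a2b + ab2)))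
     / (2*(aa*bb - ab^2)^2))"
proof -
  have s: "sqrt D > 0" using assms by simp
  have ss2: "\<And>x. sqrt D * (sqrt D * x) = D * x" using assms(2) by (simp add: mult.assoc[symmetric])
  show ?thesis unfolding quot_sqrt_deriv_def assms(1)[symmetric] using s assms(2)
    by (simp add: field_simps power2_eq_square) (simp add: ss2 algebra_simps)
qed

lemma DERIV_gram_det:
  fixes A B :: "real \<Rightarrow> real^3"
  assumes "(A has_vector_derivative A') (at t0)" "(B has_vector_derivative B') (at t0)"
  shows "((\<lambda>t. (A t\<bullet>A t)*(B t\<bullet>B t) - (A t\<bullet>B t)^2) has_real_derivative
     ((A'\<bullet>A t0 + A t0\<bullet>A')*(B t0\<bullet>B t0) + (A t0\<bullet>A t0)*(B'\<bullet>B t0 + B t0\<bullet>B') - 2*(A t0\<bullet>B t0)*(A'\<bullet>B t0 + A t0\<bullet>B'))) (at t0)"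
proof -
  have "((\<lambda>t. (A t\<bullet>A t)*(B t\<bullet>B t) - (A t\<bullet>B t)*(A t\<bullet>B t)) has_real_derivative
     ((A'\<bullet>A t0 + A t0\<bullet>A')*(B t0\<bullet>B t0) + (A t0\<bullet>A t0)*(B'\<bullet>B t0 + B t0\<bullet>B') -
      ((A'\<bullet>B t0 + A t0\<bullet>B')*(A t0\<bullet>B t0) + (A t0\<bullet>B t0)*(A'\<bullet>B t0 + A t0\<bullet>B')))) (at t0)"
    by (intro DERIV_diff DERIV_mult_both DERIV_inner assms)
  thus ?thesis by (simp add: power2_eq_square algebra_simps)
qed

lemma gdet_nonneg: "gdet X w \<ge> 0"
  unfolding gdet_def g11_def g22_def g12_def using cross3_inner_self[of "pd1 X w" "pd2 X w"]
  by (metis inner_ge_zero)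

lemma sqrt_mult_divide_self:
  fixes D G :: real
  assumes "D \<ge> 0"
  shows "sqrt D * (G / D) = G / sqrt D"
proof -
  have "G / sqrt D = G / (D / sqrt D)" using real_div_sqrt[OF assms] by simp
  thus ?thesis by (simp add: mult.commute)
qed

lemma lap_loc_flux1:
  "sqrt (gdet X w) * (ginv11 X w * pd1 f w + ginv12 X w * pd2 f w) =
   (g22 X w * pd1 f w - g12 X w * pd2 f w) / sqrt (gdet X w)"
proof -
  have "sqrt (gdet X w) * (ginv11 X w * pd1 f w + ginv12 X w * pd2 f w) =
        sqrt (gdet X w) * ((g22 X w * pd1 f w - g12 X w * pd2 f w) / gdet X w)"
    unfolding ginv11_def ginv12_def by (cases "gdet X w = 0") (simp_all add: field_simps)
  also have "\<dots> = (g22 X w * pd1 f w - g12 X w * pd2 f w) / sqrt (gdet X w)"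
    by (rule sqrt_mult_divide_self[OF gdet_nonneg])
  finally show ?thesis .
qed

lemma lap_loc_flux2:
  "sqrt (gdet X w) * (ginv12 X w * pd1 f w + ginv22 X w * pd2 f w) =
   (g11 X w * pd2 f w - g12 X w * pd1 f w) / sqrt (gdet X w)"
proof -
  have "sqrt (gdet X w) * (ginv12 X w * pd1 f w + ginv22 X w * pd2 f w) =
        sqrt (gdet X w) * ((g11 X w * pd2 f w - g12 X w * pd1 f w) / gdet X w)"
    unfolding ginv22_def ginv12_def by (cases "gdet X w = 0") (simp_all add: field_simps)
  also have "\<dots> = (g11 X w * pd2 f w - g12 X w * pd1 f w) / sqrt (gdet X w)"
    by (rule sqrt_mult_divide_self[OF gdet_nonneg])
  finally show ?thesis .
qed

lemma pd1_eqI: "((\<lambda>t. F (t, y)) has_real_derivative d) (at x) \<Longrightarrow> pd1 F (x, y) = d"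
  unfolding pd1_def by (simp add: vector_derivative_at has_real_derivative_iff_has_vector_derivative)
lemma pd2_eqI: "((\<lambda>t. F (x, t)) has_real_derivative d) (at y) \<Longrightarrow> pd2 F (x, y) = d"
  unfolding pd2_def by (simp add: vector_derivative_at has_real_derivative_iff_has_vector_derivative)

text \<open>lap_loc is in divergence form; both fluxes are differentiated by the quotient rule.\<close>

lemma lap_loc_eq_lap_jet:
  fixes X :: "R2 \<Rightarrow> real^3" and f :: "R2 \<Rightarrow> real"
  assumes hX11: "((\<lambda>t. pd1 X (t, y)) has_vector_derivative a1) (at x)"
   and hX21: "((\<lambda>t. pd2 X (t, y)) has_vector_derivative b1) (at x)"
   and hX12: "((\<lambda>t. pd1 X (x, t)) has_vector_derivative a2) (at y)"
   and hX22: "((\<lambda>t. pd2 X (x, t)) has_vector_derivative b2) (at y)"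
   and hf11: "((\<lambda>t. pd1 f (t, y)) has_real_derivative p1) (at x)"
   and hf21: "((\<lambda>t. pd2 f (t, y)) has_real_derivative q1) (at x)"
   and hf12: "((\<lambda>t. pd1 f (x, t)) has_real_derivative p2) (at y)"
   and hf22: "((\<lambda>t. pd2 f (x, t)) has_real_derivative q2) (at y)"
   and D: "gdet X (x,y) > 0"
  shows "lap_loc X f (x,y) = lap_jet (pd1 X (x,y)) (pd2 X (x,y)) a1 b1 a2 b2 (pd1 f (x,y)) (pd2 f (x,y)) p1 q1 p2 q2"
proof -
  define a where "a = pd1 X (x,y)"
  define b where "b = pd2 X (x,y)"
  have D': "(\<lambda>t. (pd1 X (t,y)\<bullet>pd1 X (t,y))*(pd2 X (t,y)\<bullet>pd2 X (t,y)) - (pd1 X (t,y)\<bullet>pd2 X (t,y))^2) x > 0"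
    using D by (simp add: gdet_def g11_def g22_def g12_def)
  have D'': "(\<lambda>t. (pd1 X (x,t)\<bullet>pd1 X (x,t))*(pd2 X (x,t)\<bullet>pd2 X (x,t)) - (pd1 X (x,t)\<bullet>pd2 X (x,t))^2) y > 0"
    using D by (simp add: gdet_def g11_def g22_def g12_def)
  have d1: "((\<lambda>t. (g22 X (t,y) * pd1 f (t,y) - g12 X (t,y) * pd2 f (t,y)) / sqrt (gdet X (t,y))) has_real_derivative
     quot_sqrt_deriv (b1\<bullet>b + b\<bullet>b1) (pd1 f (x,y)) (b\<bullet>b) p1 (a1\<bullet>b + a\<bullet>b1) (pd2 f (x,y)) (a\<bullet>b) q1 (gdet X (x,y))
        ((a1\<bullet>a + a\<bullet>a1)*(b\<bullet>b) + (a\<bullet>a)*(b1\<bullet>b + b\<bullet>b1) - 2*(a\<bullet>b)*(a1\<bullet>b + a\<bullet>b1))) (at x)"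
    using DERIV_quotient_sqrt[OF DERIV_inner[OF hX21 hX21] DERIV_inner[OF hX11 hX21] DERIV_gram_det[OF hX11 hX21] hf11 hf21 D']
    unfolding quot_sqrt_deriv_def a_def b_def by (simp add: gdet_def g11_def g22_def g12_def)
  have d2: "((\<lambda>t. (g11 X (x,t) * pd2 f (x,t) - g12 X (x,t) * pd1 f (x,t)) / sqrt (gdet X (x,t))) has_real_derivative
     quot_sqrt_deriv (a2\<bullet>a + a\<bullet>a2) (pd2 f (x,y)) (a\<bullet>a) q2 (a2\<bullet>b + a\<bullet>b2) (pd1 f (x,y)) (a\<bullet>b) p2 (gdet X (x,y))
        ((a2\<bullet>a + a\<bullet>a2)*(b\<bullet>b) + (a\<bullet>a)*(b2\<bullet>b + b\<bullet>b2) - 2*(a\<bullet>b)*(a2\<bullet>b + a\<bullet>b2))) (at y)"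
    using DERIV_quotient_sqrt[OF DERIV_inner[OF hX12 hX12] DERIV_inner[OF hX12 hX22] DERIV_gram_det[OF hX12 hX22] hf22 hf12 D'']
    unfolding quot_sqrt_deriv_def a_def b_def by (simp add: gdet_def g11_def g22_def g12_def)
  have "lap_loc X f (x,y) = (1 / sqrt (gdet X (x,y))) *
     (quot_sqrt_deriv (b1\<bullet>b + b\<bullet>b1) (pd1 f (x,y)) (b\<bullet>b) p1 (a1\<bullet>b + a\<bullet>b1) (pd2 f (x,y)) (a\<bullet>b) q1 (gdet X (x,y))
        ((a1\<bullet>a + a\<bullet>a1)*(b\<bullet>b) + (a\<bullet>a)*(b1\<bullet>b + b\<bullet>b1) - 2*(a\<bullet>b)*(a1\<bullet>b + a\<bullet>b1))
    + quot_sqrt_deriv (a2\<bullet>a + a\<bullet>a2) (pd2 f (x,y)) (a\<bullet>a) q2 (a2\<bullet>b + a\<bullet>b2) (pd1 f (x,y)) (a\<bullet>b) p2 (gdet X (x,y))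
        ((a2\<bullet>a + a\<bullet>a2)*(b\<bullet>b) + (a\<bullet>a)*(b2\<bullet>b + b\<bullet>b2) - 2*(a\<bullet>b)*(a2\<bullet>b + a\<bullet>b2)))"
    unfolding lap_loc_def lap_loc_flux1 lap_loc_flux2 using pd1_eqI[OF d1] pd2_eqI[OF d2] by simp
  also have "\<dots> = lap_jet a b a1 b1 a2 b2 (pd1 f (x,y)) (pd2 f (x,y)) p1 q1 p2 q2"
    unfolding lap_jet_def
    apply (simp only: inner_commute[of b1 b] inner_commute[of a1 a] inner_commute[of a2 a] inner_commute[of b2 b])
    apply (rule lap_jet_divergence_form)
    using D by (simp_all add: gdet_def g11_def g22_def g12_def a_def b_def)
  finally show ?thesis unfolding a_def b_def .
qed

lemma grad_inner_loc_eq_jet_inner: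
  "grad_inner_loc X f g z = jet_inner (pd1 X z) (pd2 X z) (pd1 f z) (pd2 f z) (pd1 g z) (pd2 g z)"
  unfolding grad_inner_loc_def jet_inner_def ginv11_def ginv12_def ginv22_def gdet_def g11_def g12_def g22_def
  by (simp add: add_divide_distrib diff_divide_distrib algebra_simps)

lemma DERIV_inner_const:
  fixes A :: "real \<Rightarrow> real^3"
  assumes "(A has_vector_derivative a) (at t)"
  shows "((\<lambda>s. A s \<bullet> e) has_real_derivative a \<bullet> e) (at t)"
proof -
  have "((\<lambda>s. A s \<bullet> e) has_derivative (\<lambda>h. (h *\<^sub>R a) \<bullet> e)) (at t)"
    using bounded_linear.has_derivative[OF bounded_linear_inner_left assms[unfolded has_vector_derivative_def]] .
  moreover have "(\<lambda>h. (h *\<^sub>R a) \<bullet> e) = (*) (a \<bullet> e)" by (rule ext) simp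
  ultimately show ?thesis unfolding has_field_derivative_def by simp
qed

lemma dist_Pair_le_abs: "dist (t::real, s::real) (x, y) \<le> \<bar>t - x\<bar> + \<bar>s - y\<bar>"
  unfolding dist_Pair_Pair dist_real_def using sqrt_sum_squares_le_sum_abs by simp

lemma square_in_ball:
  assumes "ball (x::real, y::real) r \<subseteq> U" "0 < h" "2*h < r" "x \<le> t" "t \<le> x + h" "y \<le> s" "s \<le> y + h"
  shows "(t, s) \<in> U" "dist (t,s) (x,y) < r"
proof -
  have "dist (t,s) (x,y) \<le> \<bar>t - x\<bar> + \<bar>s - y\<bar>" by (rule dist_Pair_le_abs)
  also have "\<dots> \<le> 2*h" using assms by auto
  finally show "dist (t,s) (x,y) < r" using assms by simp
  thus "(t, s) \<in> U" using assms(1) by (auto simp: dist_commute)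
qed

lemma second_difference_mvt:
  fixes f fa fab :: "real \<times> real \<Rightarrow> real"
  assumes h: "0 < h"
    and d1: "\<And>t s. x \<le> t \<Longrightarrow> t \<le> x + h \<Longrightarrow> y \<le> s \<Longrightarrow> s \<le> y + h \<Longrightarrow>
               ((\<lambda>t. f (t, s)) has_real_derivative fa (t, s)) (at t)"
    and d12: "\<And>t s. x \<le> t \<Longrightarrow> t \<le> x + h \<Longrightarrow> y \<le> s \<Longrightarrow> s \<le> y + h \<Longrightarrow>
               ((\<lambda>s. fa (t, s)) has_real_derivative fab (t, s)) (at s)"
  shows "\<exists>\<xi> \<eta>. x < \<xi> \<and> \<xi> < x + h \<and> y < \<eta> \<and> \<eta> < y + h \<and>
           f (x+h, y+h) - f (x+h, y) - f (x, y+h) + f (x, y) = h * h * fab (\<xi>, \<eta>)"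
proof -
  obtain \<xi> where \<xi>: "x < \<xi>" "\<xi> < x + h"
    "(f (x+h, y+h) - f (x+h, y)) - (f (x, y+h) - f (x, y)) = ((x+h) - x) * (fa (\<xi>, y+h) - fa (\<xi>, y))"
  proof -
    have "\<exists>\<xi>. x < \<xi> \<and> \<xi> < x + h \<and>
        (\<lambda>t. f (t, y+h) - f (t, y)) (x+h) - (\<lambda>t. f (t, y+h) - f (t, y)) x = ((x+h) - x) * (fa (\<xi>, y+h) - fa (\<xi>, y))"
      using h by (intro MVT2 DERIV_diff d1) auto
    thus ?thesis using that by auto
  qed
  obtain \<eta> where \<eta>: "y < \<eta>" "\<eta> < y + h" "fa (\<xi>, y+h) - fa (\<xi>, y) = ((y+h) - y) * fab (\<xi>, \<eta>)"
    using MVT2[of y "y+h" "\<lambda>s. fa (\<xi>, s)" "\<lambda>s. fab (\<xi>, s)"] h \<xi> d12 by auto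
  show ?thesis using \<xi> \<eta> by (intro exI[of _ \<xi>] exI[of _ \<eta>]) (simp add: algebra_simps)
qed

lemma mixed_partials_eq:
  fixes f fa fb fab fba :: "real \<times> real \<Rightarrow> real"
  assumes U: "open U" "(x, y) \<in> U"
    and hf1: "\<forall>w\<in>U. ((\<lambda>t. f (t, snd w)) has_real_derivative fa w) (at (fst w))"
    and hf2: "\<forall>w\<in>U. ((\<lambda>t. f (fst w, t)) has_real_derivative fb w) (at (snd w))"
    and hf12: "\<forall>w\<in>U. ((\<lambda>t. fa (fst w, t)) has_real_derivative fab w) (at (snd w))"
    and hf21: "\<forall>w\<in>U. ((\<lambda>t. fb (t, snd w)) has_real_derivative fba w) (at (fst w))"
    and c12: "continuous_on U fab" and c21: "continuous_on U fba"
  shows "fab (x, y) = fba (x, y)"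
proof (rule ccontr)
  assume ne: "fab (x, y) \<noteq> fba (x, y)"
  define e where "e = \<bar>fab (x, y) - fba (x, y)\<bar> / 2"
  have e: "e > 0" using ne by (simp add: e_def)
  obtain r0 where r0: "r0 > 0" "ball (x,y) r0 \<subseteq> U" using U open_contains_ball by blast
  obtain d1 where d1: "d1 > 0" "\<forall>w\<in>U. dist w (x,y) < d1 \<longrightarrow> dist (fab w) (fab (x,y)) < e"
    using c12 U e unfolding continuous_on_iff by blast
  obtain d2 where d2: "d2 > 0" "\<forall>w\<in>U. dist w (x,y) < d2 \<longrightarrow> dist (fba w) (fba (x,y)) < e"
    using c21 U e unfolding continuous_on_iff by blast
  define r where "r = min r0 (min d1 d2)"
  have r: "r > 0" "ball (x,y) r \<subseteq> U" using r0 d1 d2 by (auto simp: r_def)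
  define h where "h = r / 4"
  have h: "h > 0" "2*h < r" using r by (auto simp: h_def)
  have sq: "(t, s) \<in> U \<and> dist (t,s) (x,y) < r" if "x \<le> t" "t \<le> x + h" "y \<le> s" "s \<le> y + h" for t s
    using square_in_ball[OF r(2) h that] by blast
  obtain \<xi> \<eta> where \<xi>\<eta>: "x < \<xi>" "\<xi> < x + h" "y < \<eta>" "\<eta> < y + h"
    "f (x+h, y+h) - f (x+h, y) - f (x, y+h) + f (x, y) = h * h * fab (\<xi>, \<eta>)"
    using second_difference_mvt[OF h(1), of x y f fa fab] hf1 hf12 sq by fastforce
  obtain \<eta>' \<xi>' where \<eta>'\<xi>': "y < \<eta>'" "\<eta>' < y + h" "x < \<xi>'" "\<xi>' < x + h"
    "f (x+h, y+h) - f (x, y+h) - f (x+h, y) + f (x, y) = h * h * fba (\<xi>', \<eta>')"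
    using second_difference_mvt[OF h(1), of y x "\<lambda>p. f (snd p, fst p)" "\<lambda>p. fb (snd p, fst p)"
        "\<lambda>p. fba (snd p, fst p)"] hf2 hf21 sq by fastforce
  have "h * h * fab (\<xi>, \<eta>) = h * h * fba (\<xi>', \<eta>')" using \<xi>\<eta>(5) \<eta>'\<xi>'(5) by linarith
  hence eq: "fab (\<xi>, \<eta>) = fba (\<xi>', \<eta>')" using h by simp
  have "dist (fab (\<xi>, \<eta>)) (fab (x,y)) < e" using d1 sq[of \<xi> \<eta>] \<xi>\<eta> by (auto simp: r_def)
  moreover have "dist (fba (\<xi>', \<eta>')) (fba (x,y)) < e" using d2 sq[of \<xi>' \<eta>'] \<eta>'\<xi>' by (auto simp: r_def)
  ultimately have "\<bar>fab (x,y) - fba (x,y)\<bar> < 2*e" using eq by (simp add: dist_real_def)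
  thus False by (simp add: e_def)
qed

lemma has_derivative_from_partials:
  fixes f f2 :: "real \<times> real \<Rightarrow> real" and f1 :: real
  assumes U: "open U" "(x, y) \<in> U"
    and hf1: "((\<lambda>t. f (t, y)) has_real_derivative f1) (at x)"
    and hf2: "\<forall>w\<in>U. ((\<lambda>t. f (fst w, t)) has_real_derivative f2 w) (at (snd w))"
    and c2: "continuous_on U f2"
  shows "(f has_derivative (\<lambda>(h, k). h * f1 + k * f2 (x, y))) (at (x, y))"
proof -
  obtain r where r: "r > 0" "ball (x,y) r \<subseteq> U" using U open_contains_ball by blast
  define X where "X = ball x (r/2)"
  define Y where "Y = ball y (r/2)"
  have XY: "X \<times> Y \<subseteq> U"
  proof
    fix p assume "p \<in> X \<times> Y"
    then obtain a b where p: "p = (a,b)" "dist x a < r/2" "dist y b < r/2" by (auto simp: X_def Y_def)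
    have "dist (a,b) (x,y) \<le> \<bar>a - x\<bar> + \<bar>b - y\<bar>" by (rule dist_Pair_le_abs)
    also have "\<dots> < r" using p by (simp add: dist_real_def abs_minus_commute[of a x] abs_minus_commute[of b y])
    finally show "p \<in> U" using r p by (auto simp: dist_commute)
  qed
  have opXY: "open (X \<times> Y)" by (simp add: X_def Y_def open_Times)
  have inXY: "(x, y) \<in> X \<times> Y" using r by (simp add: X_def Y_def)
  define F where "F = (\<lambda>a b. f (a, b))"
  have "((\<lambda>(a, b). F a b) has_derivative (\<lambda>(tx, ty). tx * f1 + blinfun_apply (blinfun_scaleR_left (f2 (x, y))) ty)) (at (x, y) within X \<times> Y)"
  proof (rule has_derivative_partialsI)
    have e: "(\<lambda>h. h * f1) = (*) f1" by (rule ext) (simp add: mult.commute)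
    show "((\<lambda>a. F a y) has_derivative (\<lambda>h. h * f1)) (at x within X)"
      unfolding e F_def using hf1 unfolding has_field_derivative_def by (rule has_derivative_at_withinI)
    fix a b assume ab: "a \<in> X" "b \<in> Y"
    hence "(a, b) \<in> U" using XY by auto
    hence d: "((\<lambda>t. f (a, t)) has_real_derivative f2 (a, b)) (at b)" using hf2 by force
    have e: "blinfun_apply (blinfun_scaleR_left (f2 (a, b))) = (*) (f2 (a, b))" by (rule ext) (simp add: mult.commute)
    show "((\<lambda>b. F a b) has_derivative blinfun_apply (blinfun_scaleR_left (f2 (a, b)))) (at b within Y)"
      unfolding e F_def using d unfolding has_field_derivative_def by (rule has_derivative_at_withinI)
  next
    have "continuous_on (X \<times> Y) (\<lambda>p. blinfun_scaleR_left (f2 p))"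
      by (intro continuous_on_compose2[OF _ continuous_on_subset[OF c2 XY], of UNIV blinfun_scaleR_left])
         (auto intro: linear_continuous_on bounded_linear_blinfun_scaleR_left)
    hence "continuous (at (x, y) within X \<times> Y) (\<lambda>p. blinfun_scaleR_left (f2 p))"
      using inXY continuous_on_eq_continuous_within by blast
    thus "continuous (at (x, y) within X \<times> Y) (\<lambda>(a, b). blinfun_scaleR_left (f2 (a, b)))"
      by (simp add: case_prod_beta')
  qed (use r in \<open>auto simp: Y_def\<close>)
  hence "((\<lambda>(a, b). F a b) has_derivative (\<lambda>(tx, ty). tx * f1 + blinfun_apply (blinfun_scaleR_left (f2 (x, y))) ty)) (at (x, y))"
    using at_within_open[OF inXY opXY] by simp
  thus ?thesis unfolding F_def by (simp add: case_prod_beta' mult.commute)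
qed

lemma has_derivative_line:
  fixes x y v1 v2 t0 :: real
  shows "((\<lambda>t. (x + t* v1, y + t* v2)) has_derivative (\<lambda>h. (h* v1, h* v2))) (at t0)"
proof -
  have "((\<lambda>t. (x + t * v1, y + t * v2)) has_derivative (\<lambda>h. (0 + h * v1, 0 + h * v2))) (at t0)"
    by (intro has_derivative_Pair has_derivative_add has_derivative_const bounded_linear_imp_has_derivative) (rule bounded_linear_mult_left)+
  thus ?thesis by simp
qed

lemma DERIV_along_line:
  fixes f f1 f2 :: "real \<times> real \<Rightarrow> real"
  assumes U: "open U" "(x + t0* v1, y + t0* v2) \<in> U"
    and hf1: "\<forall>w\<in>U. ((\<lambda>t. f (t, snd w)) has_real_derivative f1 w) (at (fst w))"
    and hf2: "\<forall>w\<in>U. ((\<lambda>t. f (fst w, t)) has_real_derivative f2 w) (at (snd w))"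
    and c2: "continuous_on U f2"
  shows "((\<lambda>t. f (x + t* v1, y + t* v2)) has_real_derivative
           (v1 * f1 (x + t0* v1, y + t0* v2) + v2 * f2 (x + t0* v1, y + t0* v2))) (at t0)"
proof -
  let ?p = "(x + t0* v1, y + t0* v2)"
  have "((\<lambda>t. f (t, y + t0* v2)) has_real_derivative f1 ?p) (at (x + t0* v1))" using hf1 U by force
  from has_derivative_from_partials[OF U this hf2 c2]
  have F: "(f has_derivative (\<lambda>(h, k). h * f1 ?p + k * f2 ?p)) (at ?p)" .
  have "((\<lambda>t. f (x + t* v1, y + t* v2)) has_derivative (\<lambda>h. (\<lambda>(h, k). h * f1 ?p + k * f2 ?p) (h* v1, h* v2))) (at t0)"
    using has_derivative_compose[OF has_derivative_line F] by simp
  moreover have "(\<lambda>h. (\<lambda>(h, k). h * f1 ?p + k * f2 ?p) (h* v1, h* v2)) = (*) (v1 * f1 ?p + v2 * f2 ?p)"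
    by (rule ext) (simp add: algebra_simps)
  ultimately show ?thesis unfolding has_field_derivative_def by simp
qed

lemma DERIV_local_max_second_order:
  fixes g g' :: "real \<Rightarrow> real"
  assumes \<delta>: "\<delta> > 0"
    and dg: "\<And>t. \<bar>t\<bar> < \<delta> \<Longrightarrow> (g has_real_derivative g' t) (at t)"
    and g'0: "g' 0 = 0" and dg': "(g' has_real_derivative c) (at 0)"
    and mx: "\<And>t. \<bar>t\<bar> < \<delta> \<Longrightarrow> g t \<le> g 0"
  shows "c \<le> 0"
proof (rule ccontr)
  assume "\<not> c \<le> 0"
  hence "c > 0" by simp
  from DERIV_pos_inc_right[OF dg' this] obtain d where d: "d > 0" "\<forall>h>0. h < d \<longrightarrow> g' 0 < g' (0 + h)"
    by blast
  define h where "h = min d \<delta> / 2"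
  have h: "h > 0" "h < d" "h < \<delta>" using d \<delta> by (auto simp: h_def)
  obtain s where s: "0 < s" "s < h" "g h - g 0 = (h - 0) * g' s"
    using MVT2[of 0 h g g'] h dg by force
  have "g' s > 0" using d s h g'0 by auto
  hence "g h > g 0" using s(3) h(1) by (simp add: algebra_simps)
  moreover have "g h \<le> g 0" using mx h by simp
  ultimately show False by simp
qed

definition has_pd1 :: "(R2 \<Rightarrow> real) \<Rightarrow> real \<Rightarrow> R2 \<Rightarrow> bool" where
  "has_pd1 f d w \<longleftrightarrow> ((\<lambda>t. f (t, snd w)) has_real_derivative d) (at (fst w))"
definition has_pd2 :: "(R2 \<Rightarrow> real) \<Rightarrow> real \<Rightarrow> R2 \<Rightarrow> bool" where
  "has_pd2 f d w \<longleftrightarrow> ((\<lambda>t. f (fst w, t)) has_real_derivative d) (at (snd w))"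

text \<open>In C2_jet, f_ij is the derivative of f_i in the j-th variable.\<close>

definition C2_jet :: "R2 set \<Rightarrow> (R2 \<Rightarrow> real) \<Rightarrow> (R2 \<Rightarrow> real) \<Rightarrow> (R2 \<Rightarrow> real) \<Rightarrow> (R2 \<Rightarrow> real)
   \<Rightarrow> (R2 \<Rightarrow> real) \<Rightarrow> (R2 \<Rightarrow> real) \<Rightarrow> (R2 \<Rightarrow> real) \<Rightarrow> bool" where
  "C2_jet U f f1 f2 f11 f12 f21 f22 \<longleftrightarrow>
    (\<forall>w\<in>U. has_pd1 f (f1 w) w \<and> has_pd2 f (f2 w) w \<and> has_pd1 f1 (f11 w) w \<and> has_pd2 f1 (f12 w) w
       \<and> has_pd1 f2 (f21 w) w \<and> has_pd2 f2 (f22 w) w) \<and>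
    continuous_on U f \<and> continuous_on U f1 \<and> continuous_on U f2 \<and> continuous_on U f11 \<and>
    continuous_on U f12 \<and> continuous_on U f21 \<and> continuous_on U f22"

lemma local_max_first_order:
  fixes f :: "real \<times> real \<Rightarrow> real"
  assumes U: "open U" "(x, y) \<in> U" and mx: "\<forall>w\<in>U. f w \<le> f (x, y)"
    and d1: "has_pd1 f p (x, y)" and d2: "has_pd2 f q (x, y)"
  shows "p = 0" "q = 0"
proof -
  obtain r where r: "r > 0" "ball (x,y) r \<subseteq> U" using U open_contains_ball by blast
  show "p = 0"
  proof (rule DERIV_local_max)
    show "((\<lambda>t. f (t, y)) has_real_derivative p) (at x)" using d1 by (simp add: has_pd1_def)
    show "\<forall>t. \<bar>x - t\<bar> < r \<longrightarrow> f (t, y) \<le> f (x, y)"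
      using r mx by (auto simp: dist_Pair_Pair dist_real_def subset_iff)
  qed (rule r)
  show "q = 0"
  proof (rule DERIV_local_max)
    show "((\<lambda>t. f (x, t)) has_real_derivative q) (at y)" using d2 by (simp add: has_pd2_def)
    show "\<forall>t. \<bar>y - t\<bar> < r \<longrightarrow> f (x, t) \<le> f (x, y)"
      using r mx by (auto simp: dist_Pair_Pair dist_real_def subset_iff)
  qed (rule r)
qed

lemma line_in_open_set:
  assumes "open U" "(x::real, y::real) \<in> U"
  obtains \<delta> where "\<delta> > 0" "\<And>t. \<bar>t\<bar> < \<delta> \<Longrightarrow> (x + t* v1, y + t* v2) \<in> U"
proof -
  obtain r where r: "r > 0" "ball (x,y) r \<subseteq> U" using assms open_contains_ball by blast
  define \<delta> where "\<delta> = r / (1 + \<bar>v1\<bar> + \<bar>v2\<bar>)"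
  have "\<delta> > 0" using r by (simp add: \<delta>_def add_pos_nonneg)
  moreover have "(x + t* v1, y + t* v2) \<in> U" if t: "\<bar>t\<bar> < \<delta>" for t
  proof -
    have "dist (x + t* v1, y + t* v2) (x, y) \<le> \<bar>t* v1\<bar> + \<bar>t* v2\<bar>"
      using dist_Pair_le_abs[of "x + t* v1" "y + t* v2" x y] by simp
    also have "\<dots> = \<bar>t\<bar> * (\<bar>v1\<bar> + \<bar>v2\<bar>)" by (simp add: abs_mult algebra_simps)
    also have "\<dots> \<le> \<bar>t\<bar> * (1 + \<bar>v1\<bar> + \<bar>v2\<bar>)" by (simp add: mult_left_mono)
    also have "\<dots> < \<delta> * (1 + \<bar>v1\<bar> + \<bar>v2\<bar>)" using t by (intro mult_strict_right_mono) (auto simp: add_pos_nonneg)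
    also have "\<dots> = r" unfolding \<delta>_def by (simp add: add_pos_nonneg)
    finally show ?thesis using r by (auto simp: dist_commute)
  qed
  ultimately show ?thesis using that by blast
qed

lemma local_max_second_order:
  fixes f f1 f2 f11 f12 f21 f22 :: "real \<times> real \<Rightarrow> real"
  assumes U: "open U" "(x, y) \<in> U" and mx: "\<forall>w\<in>U. f w \<le> f (x, y)"
    and J: "C2_jet U f f1 f2 f11 f12 f21 f22"
  shows "v1 * (v1 * f11 (x, y) + v2 * f12 (x, y)) + v2 * (v1 * f21 (x, y) + v2 * f22 (x, y)) \<le> 0"
proof -
  have hf1: "\<forall>w\<in>U. ((\<lambda>t. f (t, snd w)) has_real_derivative f1 w) (at (fst w))"
    and hf2: "\<forall>w\<in>U. ((\<lambda>t. f (fst w, t)) has_real_derivative f2 w) (at (snd w))"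
    and hf11: "\<forall>w\<in>U. ((\<lambda>t. f1 (t, snd w)) has_real_derivative f11 w) (at (fst w))"
    and hf12: "\<forall>w\<in>U. ((\<lambda>t. f1 (fst w, t)) has_real_derivative f12 w) (at (snd w))"
    and hf21: "\<forall>w\<in>U. ((\<lambda>t. f2 (t, snd w)) has_real_derivative f21 w) (at (fst w))"
    and hf22: "\<forall>w\<in>U. ((\<lambda>t. f2 (fst w, t)) has_real_derivative f22 w) (at (snd w))"
    and c: "continuous_on U f2" "continuous_on U f12" "continuous_on U f22"
    using J unfolding C2_jet_def has_pd1_def has_pd2_def by auto
  have "f1 (x, y) = 0" "f2 (x, y) = 0"
    using local_max_first_order[OF U mx] J U(2) unfolding C2_jet_def by auto
  obtain \<delta> where \<delta>: "\<delta> > 0" "\<And>t. \<bar>t\<bar> < \<delta> \<Longrightarrow> (x + t* v1, y + t* v2) \<in> U"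
    using line_in_open_set[OF U] by blast
  define g' where "g' = (\<lambda>t. v1 * f1 (x + t* v1, y + t* v2) + v2 * f2 (x + t* v1, y + t* v2))"
  show ?thesis
  proof (rule DERIV_local_max_second_order[OF \<delta>(1)])
    fix t :: real assume "\<bar>t\<bar> < \<delta>"
    thus "((\<lambda>t. f (x + t* v1, y + t* v2)) has_real_derivative g' t) (at t)"
      unfolding g'_def using DERIV_along_line[OF U(1) \<delta>(2) hf1 hf2 c(1)] by blast
    show "f (x + t* v1, y + t* v2) \<le> f (x + 0* v1, y + 0* v2)" using mx \<delta>(2) \<open>\<bar>t\<bar> < \<delta>\<close> by simp
  next
    show "g' 0 = 0" unfolding g'_def using \<open>f1 (x, y) = 0\<close> \<open>f2 (x, y) = 0\<close> by simp
    have "((\<lambda>t. f1 (x + t* v1, y + t* v2)) has_real_derivative (v1 * f11 (x, y) + v2 * f12 (x, y))) (at 0)"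
      using DERIV_along_line[of U x 0 v1 y v2 f1 f11 f12] U hf11 hf12 c(2) by simp
    moreover have "((\<lambda>t. f2 (x + t* v1, y + t* v2)) has_real_derivative (v1 * f21 (x, y) + v2 * f22 (x, y))) (at 0)"
      using DERIV_along_line[of U x 0 v1 y v2 f2 f21 f22] U hf21 hf22 c(3) by simp
    ultimately show "(g' has_real_derivative
        v1 * (v1 * f11 (x, y) + v2 * f12 (x, y)) + v2 * (v1 * f21 (x, y) + v2 * f22 (x, y))) (at 0)"
      unfolding g'_def by (intro DERIV_add DERIV_cmult)
  qed
qed

lemma has_pd1_pd1: "(\<lambda>t. f (t, snd w)) differentiable (at (fst w)) \<Longrightarrow> has_pd1 f (pd1 f w) w"
  unfolding has_pd1_def pd1_def has_real_derivative_iff_has_vector_derivative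
  by (simp add: vector_derivative_works[symmetric])
lemma has_pd2_pd2: "(\<lambda>t. f (fst w, t)) differentiable (at (snd w)) \<Longrightarrow> has_pd2 f (pd2 f w) w"
  unfolding has_pd2_def pd2_def has_real_derivative_iff_has_vector_derivative
  by (simp add: vector_derivative_works[symmetric])

lemma Ck2_iff:
  "Ck 2 U f \<longleftrightarrow> continuous_on U f \<and>
      (\<forall>z\<in>U. (\<lambda>t. f (t, snd z)) differentiable (at (fst z)) \<and> (\<lambda>t. f (fst z, t)) differentiable (at (snd z))) \<and>
      continuous_on U (pd1 f) \<and>
      (\<forall>z\<in>U. (\<lambda>t. pd1 f (t, snd z)) differentiable (at (fst z)) \<and> (\<lambda>t. pd1 f (fst z, t)) differentiable (at (snd z))) \<and>
      continuous_on U (pd1 (pd1 f)) \<and> continuous_on U (pd2 (pd1 f)) \<and>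
      continuous_on U (pd2 f) \<and>
      (\<forall>z\<in>U. (\<lambda>t. pd2 f (t, snd z)) differentiable (at (fst z)) \<and> (\<lambda>t. pd2 f (fst z, t)) differentiable (at (snd z))) \<and>
      continuous_on U (pd1 (pd2 f)) \<and> continuous_on U (pd2 (pd2 f))"
  by (simp add: numeral_2_eq_2)

lemma C2_jet_pd:
  fixes f :: "R2 \<Rightarrow> real"
  assumes "Ck 2 U f"
  shows "C2_jet U f (pd1 f) (pd2 f) (pd1 (pd1 f)) (pd2 (pd1 f)) (pd1 (pd2 f)) (pd2 (pd2 f))"
  using assms unfolding Ck2_iff C2_jet_def by (auto intro: has_pd1_pd1 has_pd2_pd2)

lemma C2_jet_diff_scaled:
  assumes "C2_jet U f f1 f2 f11 f12 f21 f22" "C2_jet U k k1 k2 k11 k12 k21 k22"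
  shows "C2_jet U (\<lambda>w. f w - c * k w) (\<lambda>w. f1 w - c * k1 w) (\<lambda>w. f2 w - c * k2 w)
     (\<lambda>w. f11 w - c * k11 w) (\<lambda>w. f12 w - c * k12 w) (\<lambda>w. f21 w - c * k21 w) (\<lambda>w. f22 w - c * k22 w)"
  using assms unfolding C2_jet_def has_pd1_def has_pd2_def
  by (auto intro!: DERIV_diff DERIV_cmult continuous_on_diff continuous_on_mult_left)

lemma C2_jet_comp:
  fixes \<Psi> \<Psi>1 \<Psi>2 :: "real \<Rightarrow> real"
  assumes J: "C2_jet U f f1 f2 f11 f12 f21 f22"
    and V: "open V" "f ` U \<subseteq> V"
    and d1: "\<And>s. s \<in> V \<Longrightarrow> (\<Psi> has_real_derivative \<Psi>1 s) (at s)"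
    and d2: "\<And>s. s \<in> V \<Longrightarrow> (\<Psi>1 has_real_derivative \<Psi>2 s) (at s)"
    and c2: "continuous_on V \<Psi>2"
  shows "C2_jet U (\<lambda>w. \<Psi> (f w)) (\<lambda>w. \<Psi>1 (f w) * f1 w) (\<lambda>w. \<Psi>1 (f w) * f2 w)
     (\<lambda>w. \<Psi>2 (f w) * f1 w * f1 w + \<Psi>1 (f w) * f11 w)
     (\<lambda>w. \<Psi>2 (f w) * f2 w * f1 w + \<Psi>1 (f w) * f12 w)
     (\<lambda>w. \<Psi>2 (f w) * f1 w * f2 w + \<Psi>1 (f w) * f21 w)
     (\<lambda>w. \<Psi>2 (f w) * f2 w * f2 w + \<Psi>1 (f w) * f22 w)"
proof -
  have c1: "continuous_on V \<Psi>1"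
    using DERIV_isCont[OF d2] by (intro continuous_at_imp_continuous_on ballI) auto
  have c0: "continuous_on V \<Psi>"
    using DERIV_isCont[OF d1] by (intro continuous_at_imp_continuous_on ballI) auto
  have cf: "continuous_on U f" using J unfolding C2_jet_def by simp
  have cc: "continuous_on U (\<lambda>w. g (f w))" if "continuous_on V g" for g :: "real \<Rightarrow> real"
    using continuous_on_compose2[OF that cf V(2)] .
  have chain1: "has_pd1 (\<lambda>w. g (f w)) (g' (f w) * d) w" if "w \<in> U" "has_pd1 f d w"
    "\<And>s. s \<in> V \<Longrightarrow> (g has_real_derivative g' s) (at s)" for g g' d w
  proof -
    have fw: "f (fst w, snd w) \<in> V" using V that(1) by auto
    show ?thesis using DERIV_chain2[OF that(3)[OF fw] that(2)[unfolded has_pd1_def]] unfolding has_pd1_def by simp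
  qed
  have chain2: "has_pd2 (\<lambda>w. g (f w)) (g' (f w) * d) w" if "w \<in> U" "has_pd2 f d w"
    "\<And>s. s \<in> V \<Longrightarrow> (g has_real_derivative g' s) (at s)" for g g' d w
  proof -
    have fw: "f (fst w, snd w) \<in> V" using V that(1) by auto
    show ?thesis using DERIV_chain2[OF that(3)[OF fw] that(2)[unfolded has_pd2_def]] unfolding has_pd2_def by simp
  qed
  show ?thesis unfolding C2_jet_def
  proof (intro conjI ballI)
    fix w assume w: "w \<in> U"
    have J': "has_pd1 f (f1 w) w" "has_pd2 f (f2 w) w" "has_pd1 f1 (f11 w) w" "has_pd2 f1 (f12 w) w"
       "has_pd1 f2 (f21 w) w" "has_pd2 f2 (f22 w) w" using J w unfolding C2_jet_def by auto
    show "has_pd1 (\<lambda>w. \<Psi> (f w)) (\<Psi>1 (f w) * f1 w) w" by (rule chain1[OF w J'(1) d1])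
    show "has_pd2 (\<lambda>w. \<Psi> (f w)) (\<Psi>1 (f w) * f2 w) w" by (rule chain2[OF w J'(2) d1])
    show "has_pd1 (\<lambda>w. \<Psi>1 (f w) * f1 w) (\<Psi>2 (f w) * f1 w * f1 w + \<Psi>1 (f w) * f11 w) w"
      using DERIV_mult_both[OF chain1[OF w J'(1) d2, unfolded has_pd1_def] J'(3)[unfolded has_pd1_def]]
      unfolding has_pd1_def by simp
    show "has_pd2 (\<lambda>w. \<Psi>1 (f w) * f1 w) (\<Psi>2 (f w) * f2 w * f1 w + \<Psi>1 (f w) * f12 w) w"
      using DERIV_mult_both[OF chain2[OF w J'(2) d2, unfolded has_pd2_def] J'(4)[unfolded has_pd2_def]]
      unfolding has_pd2_def by simp
    show "has_pd1 (\<lambda>w. \<Psi>1 (f w) * f2 w) (\<Psi>2 (f w) * f1 w * f2 w + \<Psi>1 (f w) * f21 w) w"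
      using DERIV_mult_both[OF chain1[OF w J'(1) d2, unfolded has_pd1_def] J'(5)[unfolded has_pd1_def]]
      unfolding has_pd1_def by simp
    show "has_pd2 (\<lambda>w. \<Psi>1 (f w) * f2 w) (\<Psi>2 (f w) * f2 w * f2 w + \<Psi>1 (f w) * f22 w) w"
      using DERIV_mult_both[OF chain2[OF w J'(2) d2, unfolded has_pd2_def] J'(6)[unfolded has_pd2_def]]
      unfolding has_pd2_def by simp
  qed (use J cc[OF c0] cc[OF c1] cc[OF c2] in \<open>auto simp: C2_jet_def intro!: continuous_on_mult continuous_on_add\<close>)
qed

lemma has_vector_derivative_pd1: "(\<lambda>t. F (t, snd w)) differentiable (at (fst w)) \<Longrightarrow>
   ((\<lambda>t. F (t, snd w)) has_vector_derivative pd1 F w) (at (fst w))"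
  unfolding pd1_def by (simp add: vector_derivative_works[symmetric])
lemma has_vector_derivative_pd2: "(\<lambda>t. F (fst w, t)) differentiable (at (snd w)) \<Longrightarrow>
   ((\<lambda>t. F (fst w, t)) has_vector_derivative pd2 F w) (at (snd w))"
  unfolding pd2_def by (simp add: vector_derivative_works[symmetric])

lemma has_pd1_inner:
  fixes A B :: "R2 \<Rightarrow> real^3"
  assumes "((\<lambda>t. A (t, snd w)) has_vector_derivative A') (at (fst w))"
          "((\<lambda>t. B (t, snd w)) has_vector_derivative B') (at (fst w))"
  shows "has_pd1 (\<lambda>w. c * (A w \<bullet> B w)) (c * (A' \<bullet> B w + A w \<bullet> B')) w"
  using DERIV_cmult[OF DERIV_inner[OF assms]] unfolding has_pd1_def by simp
lemma has_pd2_inner: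
  fixes A B :: "R2 \<Rightarrow> real^3"
  assumes "((\<lambda>t. A (fst w, t)) has_vector_derivative A') (at (snd w))"
          "((\<lambda>t. B (fst w, t)) has_vector_derivative B') (at (snd w))"
  shows "has_pd2 (\<lambda>w. c * (A w \<bullet> B w)) (c * (A' \<bullet> B w + A w \<bullet> B')) w"
  using DERIV_cmult[OF DERIV_inner[OF assms]] unfolding has_pd2_def by simp

lemma C2_jet_norm_sq:
  fixes X :: "R2 \<Rightarrow> real^3"
  assumes "Ck 2 U X"
  shows "C2_jet U (\<lambda>w. 1 + X w \<bullet> X w) (\<lambda>w. 2 * (X w \<bullet> pd1 X w)) (\<lambda>w. 2 * (X w \<bullet> pd2 X w))
    (\<lambda>w. 2 * (pd1 X w \<bullet> pd1 X w + X w \<bullet> pd1 (pd1 X) w))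
    (\<lambda>w. 2 * (pd2 X w \<bullet> pd1 X w + X w \<bullet> pd2 (pd1 X) w))
    (\<lambda>w. 2 * (pd1 X w \<bullet> pd2 X w + X w \<bullet> pd1 (pd2 X) w))
    (\<lambda>w. 2 * (pd2 X w \<bullet> pd2 X w + X w \<bullet> pd2 (pd2 X) w))"
proof -
  note C = assms[unfolded Ck2_iff]
  show ?thesis unfolding C2_jet_def
  proof (intro conjI ballI)
    fix w assume w: "w \<in> U"
    have X1: "((\<lambda>t. X (t, snd w)) has_vector_derivative pd1 X w) (at (fst w))" using C w by (intro has_vector_derivative_pd1) auto
    have X2: "((\<lambda>t. X (fst w, t)) has_vector_derivative pd2 X w) (at (snd w))" using C w by (intro has_vector_derivative_pd2) auto
    have X11: "((\<lambda>t. pd1 X (t, snd w)) has_vector_derivative pd1 (pd1 X) w) (at (fst w))" using C w by (intro has_vector_derivative_pd1) auto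
    have X12: "((\<lambda>t. pd1 X (fst w, t)) has_vector_derivative pd2 (pd1 X) w) (at (snd w))" using C w by (intro has_vector_derivative_pd2) auto
    have X21: "((\<lambda>t. pd2 X (t, snd w)) has_vector_derivative pd1 (pd2 X) w) (at (fst w))" using C w by (intro has_vector_derivative_pd1) auto
    have X22: "((\<lambda>t. pd2 X (fst w, t)) has_vector_derivative pd2 (pd2 X) w) (at (snd w))" using C w by (intro has_vector_derivative_pd2) auto
    have "has_pd1 (\<lambda>w. 1 * (X w \<bullet> X w)) (1 * (pd1 X w \<bullet> X w + X w \<bullet> pd1 X w)) w" by (rule has_pd1_inner[OF X1 X1])
    thus "has_pd1 (\<lambda>w. 1 + X w \<bullet> X w) (2 * (X w \<bullet> pd1 X w)) w"
      unfolding has_pd1_def using DERIV_add[OF DERIV_const[of 1]] by (fastforce simp: inner_commute)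
    have "has_pd2 (\<lambda>w. 1 * (X w \<bullet> X w)) (1 * (pd2 X w \<bullet> X w + X w \<bullet> pd2 X w)) w" by (rule has_pd2_inner[OF X2 X2])
    thus "has_pd2 (\<lambda>w. 1 + X w \<bullet> X w) (2 * (X w \<bullet> pd2 X w)) w"
      unfolding has_pd2_def using DERIV_add[OF DERIV_const[of 1]] by (fastforce simp: inner_commute)
    have "has_pd1 (\<lambda>w. 2 * (X w \<bullet> pd1 X w)) (2 * (pd1 X w \<bullet> pd1 X w + X w \<bullet> pd1 (pd1 X) w)) w"
      by (rule has_pd1_inner[OF X1 X11])
    thus "has_pd1 (\<lambda>w. 2 * (X w \<bullet> pd1 X w)) (2 * (pd1 X w \<bullet> pd1 X w + X w \<bullet> pd1 (pd1 X) w)) w" .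
    have "has_pd2 (\<lambda>w. 2 * (X w \<bullet> pd1 X w)) (2 * (pd2 X w \<bullet> pd1 X w + X w \<bullet> pd2 (pd1 X) w)) w"
      by (rule has_pd2_inner[OF X2 X12])
    thus "has_pd2 (\<lambda>w. 2 * (X w \<bullet> pd1 X w)) (2 * (pd2 X w \<bullet> pd1 X w + X w \<bullet> pd2 (pd1 X) w)) w" .
    show "has_pd1 (\<lambda>w. 2 * (X w \<bullet> pd2 X w)) (2 * (pd1 X w \<bullet> pd2 X w + X w \<bullet> pd1 (pd2 X) w)) w"
      by (rule has_pd1_inner[OF X1 X21])
    show "has_pd2 (\<lambda>w. 2 * (X w \<bullet> pd2 X w)) (2 * (pd2 X w \<bullet> pd2 X w + X w \<bullet> pd2 (pd2 X) w)) w"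
      by (rule has_pd2_inner[OF X2 X22])
  qed (use C in \<open>auto intro!: continuous_on_add continuous_on_mult continuous_on_inner\<close>)
qed

lemma DERIV_vec_nth:
  fixes F :: "real \<Rightarrow> real^3"
  assumes "(F has_vector_derivative d) (at x)"
  shows "((\<lambda>t. F t $ k) has_real_derivative d $ k) (at x)"
proof -
  have "((\<lambda>t. F t $ k) has_derivative (\<lambda>h. (h *\<^sub>R d) $ k)) (at x)"
    using bounded_linear.has_derivative[OF bounded_linear_vec_nth assms[unfolded has_vector_derivative_def]] .
  moreover have "(\<lambda>h. (h *\<^sub>R d) $ k) = (*) (d $ k)" by (rule ext) simp
  ultimately show ?thesis unfolding has_field_derivative_def by simp
qed

lemma mixed_partials_eq_vec:
  fixes X :: "R2 \<Rightarrow> real^3"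
  assumes "Ck 2 U X" "open U" "z \<in> U"
  shows "pd2 (pd1 X) z = pd1 (pd2 X) z"
proof -
  note C = assms(1)[unfolded Ck2_iff]
  obtain x y where z: "z = (x, y)" by (cases z)
  have "pd2 (pd1 X) (x, y) $ k = pd1 (pd2 X) (x, y) $ k" for k
  proof (rule mixed_partials_eq[where f = "\<lambda>w. X w $ k" and fa = "\<lambda>w. pd1 X w $ k" and fb = "\<lambda>w. pd2 X w $ k"
        and fab = "\<lambda>w. pd2 (pd1 X) w $ k" and fba = "\<lambda>w. pd1 (pd2 X) w $ k"])
    show "open U" "(x, y) \<in> U" using assms z by auto
    show "\<forall>w\<in>U. ((\<lambda>t. X (t, snd w) $ k) has_real_derivative pd1 X w $ k) (at (fst w))"
      using C by (auto intro!: DERIV_vec_nth has_vector_derivative_pd1)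
    show "\<forall>w\<in>U. ((\<lambda>t. X (fst w, t) $ k) has_real_derivative pd2 X w $ k) (at (snd w))"
      using C by (auto intro!: DERIV_vec_nth has_vector_derivative_pd2)
    show "\<forall>w\<in>U. ((\<lambda>t. pd1 X (fst w, t) $ k) has_real_derivative pd2 (pd1 X) w $ k) (at (snd w))"
      using C by (auto intro!: DERIV_vec_nth has_vector_derivative_pd2)
    show "\<forall>w\<in>U. ((\<lambda>t. pd2 X (t, snd w) $ k) has_real_derivative pd1 (pd2 X) w $ k) (at (fst w))"
      using C by (auto intro!: DERIV_vec_nth has_vector_derivative_pd1)
    show "continuous_on U (\<lambda>w. pd2 (pd1 X) w $ k)" "continuous_on U (\<lambda>w. pd1 (pd2 X) w $ k)"
      using C by (auto intro!: continuous_on_component)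
  qed
  thus ?thesis unfolding z by (simp add: vec_eq_iff)
qed

section \<open>Estimates in a chart\<close>

lemma gdet_eq: "gdet X z = (pd1 X z \<bullet> pd1 X z) * (pd2 X z \<bullet> pd2 X z) - (pd1 X z \<bullet> pd2 X z)^2"
  unfolding gdet_def g11_def g22_def g12_def ..

lemma pd_has_vector_derivatives:
  fixes X :: "R2 \<Rightarrow> real^3"
  assumes "Ck 2 U X" "z \<in> U"
  shows "((\<lambda>t. X (t, snd z)) has_vector_derivative pd1 X z) (at (fst z))"
    "((\<lambda>t. X (fst z, t)) has_vector_derivative pd2 X z) (at (snd z))"
    "((\<lambda>t. pd1 X (t, snd z)) has_vector_derivative pd1 (pd1 X) z) (at (fst z))"
    "((\<lambda>t. pd2 X (t, snd z)) has_vector_derivative pd1 (pd2 X) z) (at (fst z))"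
    "((\<lambda>t. pd1 X (fst z, t)) has_vector_derivative pd2 (pd1 X) z) (at (snd z))"
    "((\<lambda>t. pd2 X (fst z, t)) has_vector_derivative pd2 (pd2 X) z) (at (snd z))"
  using assms unfolding Ck2_iff by (auto intro: has_vector_derivative_pd1 has_vector_derivative_pd2)

lemma lap_loc_eq_lap_jet_pd:
  fixes X :: "R2 \<Rightarrow> real^3" and f :: "R2 \<Rightarrow> real"
  assumes U: "open U" "z \<in> U" and CX: "Ck 2 U X" and nz: "cross3 (pd1 X z) (pd2 X z) \<noteq> 0"
    and Cf: "Ck 2 U f"
  shows "lap_loc X f z = lap_jet (pd1 X z) (pd2 X z) (pd1 (pd1 X) z) (pd1 (pd2 X) z) (pd1 (pd2 X) z)
    (pd2 (pd2 X) z) (pd1 f z) (pd2 f z) (pd1 (pd1 f) z) (pd1 (pd2 f) z) (pd2 (pd1 f) z) (pd2 (pd2 f) z)"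
proof -
  obtain x y where z: "z = (x, y)" by (cases z)
  have sym: "pd2 (pd1 X) z = pd1 (pd2 X) z" by (rule mixed_partials_eq_vec[OF CX U])
  have "\<forall>w\<in>U. has_pd1 (pd1 f) (pd1 (pd1 f) w) w \<and> has_pd2 (pd1 f) (pd2 (pd1 f) w) w
      \<and> has_pd1 (pd2 f) (pd1 (pd2 f) w) w \<and> has_pd2 (pd2 f) (pd2 (pd2 f) w) w"
    using C2_jet_pd[OF Cf] unfolding C2_jet_def by blast
  hence hf: "has_pd1 (pd1 f) (pd1 (pd1 f) z) z" "has_pd2 (pd1 f) (pd2 (pd1 f) z) z"
      "has_pd1 (pd2 f) (pd1 (pd2 f) z) z" "has_pd2 (pd2 f) (pd2 (pd2 f) z) z"
    using U(2) by auto
  have "gdet X z > 0" using gram_det_pos[OF nz] unfolding gdet_eq by simp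
  with pd_has_vector_derivatives[OF CX U(2)] hf show ?thesis
    unfolding z sym[unfolded z] has_pd1_def has_pd2_def by (intro lap_loc_eq_lap_jet) simp_all
qed

lemma meancurv_loc_eq_lap_jet_vec:
  fixes X :: "R2 \<Rightarrow> real^3"
  assumes U: "open U" "z \<in> U" and CX: "Ck 2 U X" and nz: "cross3 (pd1 X z) (pd2 X z) \<noteq> 0"
  shows "meancurv_loc X z =
    lap_jet_vec (pd1 X z) (pd2 X z) (pd1 (pd1 X) z) (pd1 (pd2 X) z) (pd1 (pd2 X) z) (pd2 (pd2 X) z)"
  using lap_jet_vec_normal[OF nz, of "pd1 (pd1 X) z" "pd1 (pd2 X) z" "pd2 (pd2 X) z"]
    mixed_partials_eq_vec[OF CX U]
  unfolding meancurv_loc_def normal_loc_def ginv11_def ginv12_def ginv22_def gdet_eq g11_def g12_def g22_def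
  by simp

lemma lap_loc_le_at_max:
  fixes X :: "R2 \<Rightarrow> real^3" and f h :: "R2 \<Rightarrow> real"
  assumes U: "open U" "z \<in> U" and CX: "Ck 2 U X" and nz: "cross3 (pd1 X z) (pd2 X z) \<noteq> 0"
    and Cf: "Ck 2 U f" and Jh: "C2_jet U h h1 h2 h11 h12 h21 h22"
    and mx: "\<forall>w\<in>U. f w - \<epsilon> * h w \<le> f z - \<epsilon> * h z"
  shows "pd1 f z = \<epsilon> * h1 z" "pd2 f z = \<epsilon> * h2 z"
    "lap_loc X f z \<le> \<epsilon> * lap_jet (pd1 X z) (pd2 X z) (pd1 (pd1 X) z) (pd1 (pd2 X) z) (pd1 (pd2 X) z)
       (pd2 (pd2 X) z) (h1 z) (h2 z) (h11 z) (h21 z) (h12 z) (h22 z)"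
proof -
  obtain x y where z: "z = (x, y)" by (cases z)
  define a where "a = pd1 X z"
  define b where "b = pd2 X z"
  define a1 where "a1 = pd1 (pd1 X) z"
  define b1 where "b1 = pd1 (pd2 X) z"
  define b2 where "b2 = pd2 (pd2 X) z"
  define m1 where "m1 = pd1 f z - \<epsilon> * h1 z"
  define m2 where "m2 = pd2 f z - \<epsilon> * h2 z"
  define m11 where "m11 = pd1 (pd1 f) z - \<epsilon> * h11 z"
  define m12 where "m12 = pd2 (pd1 f) z - \<epsilon> * h12 z"
  define m21 where "m21 = pd1 (pd2 f) z - \<epsilon> * h21 z"
  define m22 where "m22 = pd2 (pd2 f) z - \<epsilon> * h22 z"
  note Jm = C2_jet_diff_scaled[OF C2_jet_pd[OF Cf] Jh, of \<epsilon>]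
  have mx': "\<forall>w\<in>U. (\<lambda>w. f w - \<epsilon> * h w) w \<le> (\<lambda>w. f w - \<epsilon> * h w) (x, y)"
    using mx unfolding z by simp
  have "has_pd1 (\<lambda>w. f w - \<epsilon> * h w) m1 (x, y)" "has_pd2 (\<lambda>w. f w - \<epsilon> * h w) m2 (x, y)"
    using Jm U(2) unfolding C2_jet_def m1_def m2_def z by auto
  hence "m1 = 0" "m2 = 0" using local_max_first_order[OF U(1) _ mx'] U(2) unfolding z by blast+
  thus "pd1 f z = \<epsilon> * h1 z" "pd2 f z = \<epsilon> * h2 z" unfolding m1_def m2_def by simp_all
  have hess: "v1 * (v1 * m11 + v2 * m12) + v2 * (v1 * m21 + v2 * m22) \<le> 0" for v1 v2
    using local_max_second_order[OF U(1) _ mx' Jm] U(2) unfolding z m11_def m12_def m21_def m22_def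
    by simp
  have "lap_jet a b a1 b1 b1 b2 m1 m2 m11 m21 m12 m22 \<le> 0"
    using lap_jet_nonpos_of_neg_semidef[OF nz[folded a_def b_def] hess] \<open>m1 = 0\<close> \<open>m2 = 0\<close> by simp
  moreover have "lap_loc X f z = lap_jet a b a1 b1 b1 b2 (m1 + \<epsilon> * h1 z) (m2 + \<epsilon> * h2 z)
      (m11 + \<epsilon> * h11 z) (m21 + \<epsilon> * h21 z) (m12 + \<epsilon> * h12 z) (m22 + \<epsilon> * h22 z)"
    unfolding lap_loc_eq_lap_jet_pd[OF U CX nz Cf] a_def b_def a1_def b1_def b2_def
      m1_def m2_def m11_def m12_def m21_def m22_def by simp
  hence "lap_loc X f z = lap_jet a b a1 b1 b1 b2 m1 m2 m11 m21 m12 m22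
      + \<epsilon> * lap_jet a b a1 b1 b1 b2 (h1 z) (h2 z) (h11 z) (h21 z) (h12 z) (h22 z)"
    by (simp only: lap_jet_add_scaled)
  ultimately show "lap_loc X f z \<le> \<epsilon> * lap_jet (pd1 X z) (pd2 X z) (pd1 (pd1 X) z) (pd1 (pd2 X) z)
      (pd1 (pd2 X) z) (pd2 (pd2 X) z) (h1 z) (h2 z) (h11 z) (h21 z) (h12 z) (h22 z)"
    unfolding a_def b_def a1_def b1_def b2_def by linarith
qed

lemma pd_comp_inner_const:
  fixes X :: "R2 \<Rightarrow> real^3"
  assumes "Ck 2 U X" "z \<in> U" and dphi: "(\<phi> has_real_derivative c) (at (X z \<bullet> e))"
  shows "pd1 (\<lambda>w. \<phi> (X w \<bullet> e)) z = c * (pd1 X z \<bullet> e)" "pd2 (\<lambda>w. \<phi> (X w \<bullet> e)) z = c * (pd2 X z \<bullet> e)"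
proof -
  obtain x y where z: "z = (x, y)" by (cases z)
  note dX = pd_has_vector_derivatives(1,2)[OF assms(1,2), unfolded z fst_conv snd_conv]
  show "pd1 (\<lambda>w. \<phi> (X w \<bullet> e)) z = c * (pd1 X z \<bullet> e)" "pd2 (\<lambda>w. \<phi> (X w \<bullet> e)) z = c * (pd2 X z \<bullet> e)"
    using DERIV_chain2[OF dphi[unfolded z] DERIV_inner_const[OF dX(1)]]
      DERIV_chain2[OF dphi[unfolded z] DERIV_inner_const[OF dX(2)]]
    unfolding z by (auto intro: pd1_eqI pd2_eqI)
qed

text \<open>Concavity of \<Psi> lets the term \<Psi>''(\<sigma>)|\<nabla>\<sigma>|^2 of the chain rule be dropped.\<close>

lemma lap_loc_le_at_max_concave:
  fixes X :: "R2 \<Rightarrow> real^3" and f :: "R2 \<Rightarrow> real" and \<Psi> \<Psi>1 \<Psi>2 :: "real \<Rightarrow> real"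
  assumes U: "open U" "z \<in> U" and CX: "Ck 2 U X" and nz: "cross3 (pd1 X z) (pd2 X z) \<noteq> 0"
    and Cf: "Ck 2 U f"
    and d1: "\<And>s. s > 0 \<Longrightarrow> (\<Psi> has_real_derivative \<Psi>1 s) (at s)"
    and d2: "\<And>s. s > 0 \<Longrightarrow> (\<Psi>1 has_real_derivative \<Psi>2 s) (at s)"
    and c2: "continuous_on {0<..} \<Psi>2"
    and concave: "\<Psi>2 (1 + X z \<bullet> X z) \<le> 0" and eps: "\<epsilon> \<ge> 0"
    and mx: "\<forall>w\<in>U. f w - \<epsilon> * \<Psi> (1 + X w \<bullet> X w) \<le> f z - \<epsilon> * \<Psi> (1 + X z \<bullet> X z)"
  defines "a \<equiv> pd1 X z" and "b \<equiv> pd2 X z" and "a1 \<equiv> pd1 (pd1 X) z" and "b1 \<equiv> pd1 (pd2 X) z"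
    and "b2 \<equiv> pd2 (pd2 X) z" and "v \<equiv> X z" and "k \<equiv> \<epsilon> * \<Psi>1 (1 + X z \<bullet> X z)"
  shows "pd1 f z = k * (2 * (v \<bullet> a))" "pd2 f z = k * (2 * (v \<bullet> b))"
    "lap_loc X f z \<le> k * lap_jet a b a1 b1 b1 b2 (2*(v\<bullet>a)) (2*(v\<bullet>b)) (2*(a\<bullet>a + v\<bullet>a1))
       (2*(a\<bullet>b + v\<bullet>b1)) (2*(b\<bullet>a + v\<bullet>b1)) (2*(b\<bullet>b + v\<bullet>b2))"
proof -
  define S where "S = (\<lambda>w. 1 + X w \<bullet> X w)"
  define k1 k2 where "k1 = \<Psi>1 (S z)" and "k2 = \<Psi>2 (S z)"
  have JP: "C2_jet U (\<lambda>w. \<Psi> (S w)) (\<lambda>w. \<Psi>1 (S w) * (2 * (X w \<bullet> pd1 X w)))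
      (\<lambda>w. \<Psi>1 (S w) * (2 * (X w \<bullet> pd2 X w)))
      (\<lambda>w. \<Psi>2 (S w) * (2 * (X w \<bullet> pd1 X w)) * (2 * (X w \<bullet> pd1 X w))
         + \<Psi>1 (S w) * (2 * (pd1 X w \<bullet> pd1 X w + X w \<bullet> pd1 (pd1 X) w)))
      (\<lambda>w. \<Psi>2 (S w) * (2 * (X w \<bullet> pd2 X w)) * (2 * (X w \<bullet> pd1 X w))
         + \<Psi>1 (S w) * (2 * (pd2 X w \<bullet> pd1 X w + X w \<bullet> pd2 (pd1 X) w)))
      (\<lambda>w. \<Psi>2 (S w) * (2 * (X w \<bullet> pd1 X w)) * (2 * (X w \<bullet> pd2 X w))
         + \<Psi>1 (S w) * (2 * (pd1 X w \<bullet> pd2 X w + X w \<bullet> pd1 (pd2 X) w)))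
      (\<lambda>w. \<Psi>2 (S w) * (2 * (X w \<bullet> pd2 X w)) * (2 * (X w \<bullet> pd2 X w))
         + \<Psi>1 (S w) * (2 * (pd2 X w \<bullet> pd2 X w + X w \<bullet> pd2 (pd2 X) w)))"
    unfolding S_def by (rule C2_jet_comp[OF C2_jet_norm_sq[OF CX] _ _ d1 d2 c2]) (auto simp: add_pos_nonneg)
  have sym: "pd2 (pd1 X) z = b1" unfolding b1_def by (rule mixed_partials_eq_vec[OF CX U])
  note M = lap_loc_le_at_max[OF U CX nz Cf JP, of \<epsilon>]
  have mx': "\<forall>w\<in>U. f w - \<epsilon> * \<Psi> (S w) \<le> f z - \<epsilon> * \<Psi> (S z)" using mx unfolding S_def .
  show "pd1 f z = k * (2 * (v \<bullet> a))" "pd2 f z = k * (2 * (v \<bullet> b))"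
    using M(1,2)[OF mx'] unfolding k_def S_def a_def b_def v_def by simp_all
  have "lap_loc X f z \<le> \<epsilon> * (k2 * jet_inner a b (2*(v\<bullet>a)) (2*(v\<bullet>b)) (2*(v\<bullet>a)) (2*(v\<bullet>b))
      + k1 * lap_jet a b a1 b1 b1 b2 (2*(v\<bullet>a)) (2*(v\<bullet>b)) (2*(a\<bullet>a + v\<bullet>a1))
       (2*(a\<bullet>b + v\<bullet>b1)) (2*(b\<bullet>a + v\<bullet>b1)) (2*(b\<bullet>b + v\<bullet>b2)))"
    using M(3)[OF mx'] unfolding lap_jet_chain[symmetric] sym
    unfolding k1_def k2_def a_def b_def a1_def b1_def b2_def v_def by (simp add: mult.assoc)
  moreover have "\<epsilon> * (k2 * jet_inner a b (2*(v\<bullet>a)) (2*(v\<bullet>b)) (2*(v\<bullet>a)) (2*(v\<bullet>b))) \<le> 0"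
    using concave eps jet_inner_nonneg[OF nz[folded a_def b_def]] unfolding k2_def S_def
    by (simp add: mult_nonneg_nonpos mult_nonpos_nonneg)
  ultimately show "lap_loc X f z \<le> k * lap_jet a b a1 b1 b1 b2 (2*(v\<bullet>a)) (2*(v\<bullet>b)) (2*(a\<bullet>a + v\<bullet>a1))
       (2*(a\<bullet>b + v\<bullet>b1)) (2*(b\<bullet>a + v\<bullet>b1)) (2*(b\<bullet>b + v\<bullet>b2))"
    unfolding k_def k1_def S_def by (simp add: algebra_simps)
qed

lemma chart_estimates:
  fixes X :: "R2 \<Rightarrow> real^3" and f :: "R2 \<Rightarrow> real" and \<Psi> \<Psi>1 \<Psi>2 \<phi> :: "real \<Rightarrow> real"
  assumes U: "open U" "z \<in> U" and CX: "Ck 2 U X" and nz: "cross3 (pd1 X z) (pd2 X z) \<noteq> 0"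
    and Cf: "Ck 2 U f"
    and d1: "\<And>s. s > 0 \<Longrightarrow> (\<Psi> has_real_derivative \<Psi>1 s) (at s)"
    and d2: "\<And>s. s > 0 \<Longrightarrow> (\<Psi>1 has_real_derivative \<Psi>2 s) (at s)"
    and c2: "continuous_on {0<..} \<Psi>2"
    and concave: "\<Psi>2 (1 + X z \<bullet> X z) \<le> 0" and eps: "\<epsilon> \<ge> 0"
    and mx: "\<forall>w\<in>U. f w - \<epsilon> * \<Psi> (1 + X w \<bullet> X w) \<le> f z - \<epsilon> * \<Psi> (1 + X z \<bullet> X z)"
    and mc: "meancurv_loc X z = (c * (normal_loc X z \<bullet> e3)) *\<^sub>R normal_loc X z"
    and dphi: "(\<phi> has_real_derivative c) (at (X z \<bullet> e3))"
  shows "grad_inner_loc X f f z \<le> (\<epsilon> * \<Psi>1 (1 + X z \<bullet> X z))^2 * (4 * (X z \<bullet> X z))"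
    and "lap_loc X f z + grad_inner_loc X (\<lambda>w. \<phi> (X w \<bullet> e3)) f z
           \<le> \<epsilon> * \<Psi>1 (1 + X z \<bullet> X z) * (4 + 2 * c * (X z \<bullet> e3))"
proof -
  define a b a1 b1 b2 where "a = pd1 X z" and "b = pd2 X z" and "a1 = pd1 (pd1 X) z"
    and "b1 = pd1 (pd2 X) z" and "b2 = pd2 (pd2 X) z"
  define v k where "v = X z" and "k = \<epsilon> * \<Psi>1 (1 + X z \<bullet> X z)"
  note A = lap_loc_le_at_max_concave[OF U CX nz Cf d1 d2 c2 concave eps mx,
      folded a_def b_def a1_def b1_def b2_def k_def v_def]
  have nz': "cross3 a b \<noteq> 0" using nz unfolding a_def b_def .
  have "grad_inner_loc X f f z = jet_inner a b (k*(2*(v\<bullet>a))) (k*(2*(v\<bullet>b))) (k*(2*(v\<bullet>a))) (k*(2*(v\<bullet>b)))"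
    using A(1,2) by (simp add: grad_inner_loc_eq_jet_inner a_def b_def)
  also have "\<dots> = k^2 * 4 * jet_inner a b (v\<bullet>a) (v\<bullet>b) (v\<bullet>a) (v\<bullet>b)"
    by (simp only: jet_inner_scale) (simp add: power2_eq_square)
  also have "\<dots> \<le> k^2 * 4 * (v \<bullet> v)" using jet_inner_norm_sq_le[OF nz'] by (simp add: mult_left_mono)
  finally show "grad_inner_loc X f f z \<le> (\<epsilon> * \<Psi>1 (1 + X z \<bullet> X z))^2 * (4 * (X z \<bullet> X z))"
    unfolding k_def v_def by (simp add: algebra_simps)
  have "grad_inner_loc X (\<lambda>w. \<phi> (X w \<bullet> e3)) f z
      = k * jet_inner a b (c*(e3\<bullet>a)) (c*(e3\<bullet>b)) (2*(v\<bullet>a)) (2*(v\<bullet>b))"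
    using A(1,2) pd_comp_inner_const[OF CX U(2) dphi]
    by (simp add: grad_inner_loc_eq_jet_inner a_def b_def jet_inner_def inner_commute algebra_simps)
  moreover have "lap_loc X f z \<le> k * lap_jet a b a1 b1 b1 b2 (2*(v\<bullet>a)) (2*(v\<bullet>b))
      (2*(a\<bullet>a + v\<bullet>a1)) (2*(a\<bullet>b + v\<bullet>b1)) (2*(b\<bullet>a + v\<bullet>b1)) (2*(b\<bullet>b + v\<bullet>b2))"
    by (rule A(3))
  ultimately have "lap_loc X f z + grad_inner_loc X (\<lambda>w. \<phi> (X w \<bullet> e3)) f z
      \<le> k * (lap_jet a b a1 b1 b1 b2 (2*(v\<bullet>a)) (2*(v\<bullet>b)) (2*(a\<bullet>a + v\<bullet>a1))
        (2*(a\<bullet>b + v\<bullet>b1)) (2*(b\<bullet>a + v\<bullet>b1)) (2*(b\<bullet>b + v\<bullet>b2))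
      + jet_inner a b (c*(e3\<bullet>a)) (c*(e3\<bullet>b)) (2*(v\<bullet>a)) (2*(v\<bullet>b)))"
    by (simp add: distrib_left)
  also have "\<dots> = k * (4 + 2 * c * (v \<bullet> e3))"
  proof -
    have "lap_jet_vec a b a1 b1 b1 b2 = (c * (normal_loc X z \<bullet> e3)) *\<^sub>R normal_loc X z"
      using meancurv_loc_eq_lap_jet_vec[OF U CX nz] mc unfolding a_def b_def a1_def b1_def b2_def by simp
    moreover have "normal_loc X z = (1 / norm (cross3 a b)) *\<^sub>R cross3 a b"
      unfolding normal_loc_def a_def b_def ..
    ultimately show ?thesis using drift_lap_jet_norm_sq[OF nz'] by simp
  qed
  finally show "lap_loc X f z + grad_inner_loc X (\<lambda>w. \<phi> (X w \<bullet> e3)) f z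
      \<le> \<epsilon> * \<Psi>1 (1 + X z \<bullet> X z) * (4 + 2 * c * (X z \<bullet> e3))"
    unfolding k_def v_def .
qed

section \<open>Surfaces\<close>

lemma chart_at_in_atlas:
  assumes "oriented_immersed_surface F A"
  shows "chart_at A p \<in> A" "p \<in> fst (chart_at A p) ` snd (chart_at A p)"
proof -
  have "\<exists>c. c \<in> A \<and> p \<in> fst c ` snd c" using assms unfolding oriented_immersed_surface_def by fastforce
  hence "chart_at A p \<in> A \<and> p \<in> fst (chart_at A p) ` snd (chart_at A p)"
    unfolding chart_at_def by (rule someI_ex)
  thus "chart_at A p \<in> A" "p \<in> fst (chart_at A p) ` snd (chart_at A p)" by auto
qed

lemma coord_at_in_chart:
  assumes "oriented_immersed_surface F A"
  shows "coord_at A p \<in> snd (chart_at A p)" "fst (chart_at A p) (coord_at A p) = p"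
  using chart_at_in_atlas(2)[OF assms, of p] unfolding coord_at_def
  by (auto intro: inv_into_into f_inv_into_f)

lemma atlas_chart:
  assumes "oriented_immersed_surface F A" "(\<psi>, U) \<in> A"
  shows "open U" "open (\<psi> ` U)" "\<exists>\<psi>'. homeomorphism U (\<psi> ` U) \<psi> \<psi>'" "Cinf U (F \<circ> \<psi>)"
    "\<forall>z\<in>U. cross3 (pd1 (F \<circ> \<psi>) z) (pd2 (F \<circ> \<psi>) z) \<noteq> 0"
  using assms unfolding oriented_immersed_surface_def by fastforce+

lemma continuous_on_from_charts:
  fixes g :: "'a::{t2_space,second_countable_topology} \<Rightarrow> 'b::topological_space"
  assumes surf: "oriented_immersed_surface F A"
    and cg: "\<And>\<psi> U. (\<psi>, U) \<in> A \<Longrightarrow> continuous_on U (g \<circ> \<psi>)"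
  shows "continuous_on UNIV g"
proof (rule continuous_at_imp_continuous_on, rule ballI)
  fix p :: 'a
  obtain \<psi> U where c: "(\<psi>, U) \<in> A" "p \<in> \<psi> ` U"
    using chart_at_in_atlas[OF surf, of p] by (metis prod.collapse)
  obtain \<psi>' where h: "homeomorphism U (\<psi> ` U) \<psi> \<psi>'" using atlas_chart(3)[OF surf c(1)] by blast
  have op: "open (\<psi> ` U)" using atlas_chart(2)[OF surf c(1)] .
  have "continuous_on (\<psi> ` U) ((g \<circ> \<psi>) \<circ> \<psi>')"
  proof (rule continuous_on_compose)
    show "continuous_on (\<psi> ` U) \<psi>'" using h by (simp add: homeomorphism_def)
    have "\<psi>' ` (\<psi> ` U) = U" using h by (simp add: homeomorphism_def)
    thus "continuous_on (\<psi>' ` (\<psi> ` U)) (g \<circ> \<psi>)" using cg[OF c(1)] by simp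
  qed
  moreover have "\<And>y. y \<in> \<psi> ` U \<Longrightarrow> ((g \<circ> \<psi>) \<circ> \<psi>') y = g y"
    using h unfolding homeomorphism_def by (metis comp_apply)
  ultimately have "continuous_on (\<psi> ` U) g" by (rule continuous_on_eq)
  thus "isCont g p" using op c(2) by (auto simp: continuous_on_eq_continuous_at)
qed

lemma Ck2_imp_continuous_on: "Ck 2 U f \<Longrightarrow> continuous_on U f"
  by (simp add: numeral_2_eq_2)

lemma Cinf_imp_Ck2: "Cinf U f \<Longrightarrow> Ck 2 U f"
  unfolding Cinf_def by blast

lemma continuous_on_immersion:
  assumes surf: "oriented_immersed_surface F A"
  shows "continuous_on UNIV F"
  by (rule continuous_on_from_charts[OF surf])
    (rule Ck2_imp_continuous_on, rule Cinf_imp_Ck2, rule atlas_chart(4)[OF surf])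

lemma continuous_on_C2_surface:
  assumes surf: "oriented_immersed_surface F A" and Cu: "C2_surface A u"
  shows "continuous_on UNIV u"
  by (rule continuous_on_from_charts[OF surf])
    (rule Ck2_imp_continuous_on, use Cu in \<open>auto simp: C2_surface_def\<close>)

lemma smooth_real_DERIV:
  assumes "smooth_real \<phi>"
  shows "(\<phi> has_real_derivative deriv \<phi> t) (at t)"
proof -
  have "((deriv ^^ 0) \<phi>) differentiable (at t)" using assms unfolding smooth_real_def by blast
  thus ?thesis by (simp add: DERIV_deriv_iff_real_differentiable)
qed

lemma smooth_real_continuous_deriv:
  assumes "smooth_real \<phi>"
  shows "continuous_on UNIV (deriv \<phi>)"
proof -
  have "((deriv ^^ 1) \<phi>) differentiable (at t)" for t using assms unfolding smooth_real_def by blast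
  hence "isCont (deriv \<phi>) t" for t by (simp add: differentiable_imp_continuous_within)
  thus ?thesis by (simp add: continuous_at_imp_continuous_on)
qed

lemma continuous_attains_max_of_compact_superlevel:
  fixes w :: "'a::topological_space \<Rightarrow> real"
  assumes "continuous_on UNIV w" "compact {p. w p0 \<le> w p}"
  obtains q where "\<And>p. w p \<le> w q"
proof -
  obtain q where q: "q \<in> {p. w p0 \<le> w p}" "\<forall>p\<in>{p. w p0 \<le> w p}. w p \<le> w q"
    using continuous_attains_sup[OF assms(2) _ continuous_on_subset[OF assms(1)]] by blast
  have "w p \<le> w q" for p using q by (cases "w p0 \<le> w p") auto
  thus ?thesis using that by blast
qed

lemma phi_minimal_chart:
  fixes q :: "'a::{t2_space,second_countable_topology}"
  assumes surf: "oriented_immersed_surface F A" and minimal: "phi_minimal \<phi> F A"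
  defines "X \<equiv> F \<circ> fst (chart_at A q)" and "z \<equiv> coord_at A q"
  shows "meancurv_loc X z = (deriv \<phi> (X z \<bullet> e3) * (normal_loc X z \<bullet> e3)) *\<^sub>R normal_loc X z"
proof -
  have "mean_curvature_vector F A q = (deriv \<phi> (height F q) * (unit_normal F A q \<bullet> e3)) *\<^sub>R unit_normal F A q"
    using minimal unfolding phi_minimal_def by blast
  moreover have "height F q = X z \<bullet> e3"
    using coord_at_in_chart(2)[OF surf, of q] unfolding height_def X_def z_def by simp
  ultimately show ?thesis unfolding mean_curvature_vector_def unit_normal_def X_def z_def by simp
qed

section \<open>The exhaustion function\<close>

locale admissible_growth =
  fixes G :: "real \<Rightarrow> real" and DG :: "nat \<Rightarrow> real \<Rightarrow> real"
  assumes G_smooth: "smooth_on_halfline G DG"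
    and G0: "G 0 > 0"
    and G_mono: "\<forall>t\<ge>0. DG 1 t \<ge> 0"
    and G_nonint: "\<not> set_integrable lborel {0::real..} (\<lambda>t. 1 / sqrt (G t))"
begin

lemma DG0_eq: "t \<ge> 0 \<Longrightarrow> DG 0 t = G t"
  using G_smooth unfolding smooth_on_halfline_def by auto

lemma DG_within: "t \<ge> 0 \<Longrightarrow> (DG k has_real_derivative DG (Suc k) t) (at t within {0..})"
  using G_smooth unfolding smooth_on_halfline_def by auto

lemma DG_deriv: "t > 0 \<Longrightarrow> (DG k has_real_derivative DG (Suc k) t) (at t)"
  using DG_within[of t k] at_within_interior[of t "{0..}"] interior_Ici[of "-1" "0::real"] by simp

lemma G_deriv: "t > 0 \<Longrightarrow> (G has_real_derivative DG 1 t) (at t)"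
  using has_field_derivative_transform_within_open[OF DG_deriv[of t 0], of "{0<..}" G] DG0_eq by auto

lemma isCont_DG1: "t > 0 \<Longrightarrow> isCont (DG 1) t"
  using DG_deriv[of t 1] by (rule DERIV_isCont)

lemma continuous_on_G: "continuous_on {0..} G"
proof -
  have "continuous_on {0..} (DG 0)"
    unfolding continuous_on_eq_continuous_within
  proof
    fix t :: real assume "t \<in> {0..}"
    thus "continuous (at t within {0..}) (DG 0)" using DERIV_continuous[OF DG_within[of t 0]] by simp
  qed
  thus ?thesis by (rule continuous_on_eq) (simp add: DG0_eq)
qed

lemma G_le_mono: assumes "0 \<le> s" "s \<le> t" shows "G s \<le> G t"
proof (rule DERIV_nonneg_imp_increasing_open[OF assms(2)])
  fix x assume "s < x" "x < t"
  hence "x > 0" "x \<ge> 0" using assms by auto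
  thus "\<exists>y. (G has_real_derivative y) (at x) \<and> 0 \<le> y" using G_deriv[of x] G_mono by blast
next
  show "continuous_on {s..t} G" using continuous_on_G by (rule continuous_on_subset) (use assms in auto)
qed

lemma G_ge_G0: "t \<ge> 0 \<Longrightarrow> G t \<ge> G 0" using G_le_mono[of 0 t] by simp
lemma G_pos: "t \<ge> 0 \<Longrightarrow> G t > 0" using G_ge_G0[of t] G0 by linarith

definition rho :: "real \<Rightarrow> real" where "rho t = 1 / sqrt (G t)"
definition rho' :: "real \<Rightarrow> real" where "rho' t = - DG 1 t / (2 * G t * sqrt (G t))"

lemma continuous_on_rho: "continuous_on {0..} rho"
proof -
  have "\<forall>t\<in>{0..}. sqrt (G t) \<noteq> 0" using G_pos by (auto simp: less_le)
  thus ?thesis unfolding rho_def by (intro continuous_on_divide continuous_on_const continuous_on_compose2[OF continuous_on_real_sqrt continuous_on_G]) auto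
qed

lemma rho_integrable: "rho integrable_on {0..r}"
  by (rule integrable_continuous_real, rule continuous_on_subset[OF continuous_on_rho]) auto

lemma rho_pos: "t \<ge> 0 \<Longrightarrow> rho t > 0"
  unfolding rho_def using G_pos by simp

lemma rho_deriv: "t > 0 \<Longrightarrow> (rho has_real_derivative rho' t) (at t)"
proof -
  assume t: "t > 0"
  have Gt: "G t > 0" using G_pos t by simp
  have sq: "((\<lambda>x. sqrt (G x)) has_real_derivative inverse (sqrt (G t)) / 2 * DG 1 t) (at t)"
    using DERIV_chain2[OF DERIV_real_sqrt[OF Gt] G_deriv[OF t]] .
  have "((\<lambda>x. inverse (sqrt (G x))) has_real_derivative
      - (inverse (sqrt (G t)) / 2 * DG 1 t * inverse (sqrt (G t) ^ Suc (Suc 0)))) (at t)"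
    by (rule DERIV_inverse_fun[OF sq]) (use Gt in simp)
  moreover have "- (inverse (sqrt (G t)) / 2 * DG 1 t * inverse (sqrt (G t) ^ Suc (Suc 0))) = rho' t"
    using Gt unfolding rho'_def by (simp add: field_simps)
  moreover have "rho = (\<lambda>x. inverse (sqrt (G x)))" unfolding rho_def by (simp add: inverse_eq_divide)
  ultimately show ?thesis by simp
qed

lemma isCont_rho': "t > 0 \<Longrightarrow> isCont rho' t"
  unfolding rho'_def using G_pos[of t] DERIV_isCont[OF G_deriv, of t] isCont_DG1[of t]
  by (intro continuous_intros) auto

lemma rho'_nonpos: "t > 0 \<Longrightarrow> rho' t \<le> 0"
  unfolding rho'_def using G_pos[of t] G_mono by (simp add: divide_nonneg_pos)

definition Phi :: "real \<Rightarrow> real" where "Phi r = integral {0..r} rho"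

lemma Phi_deriv: "r > 0 \<Longrightarrow> (Phi has_real_derivative rho r) (at r)"
proof -
  assume r: "r > 0"
  have "((\<lambda>x. integral {0..x} rho) has_real_derivative rho r) (at r within {0..r+1})"
    by (rule integral_has_real_derivative) (use r continuous_on_rho in \<open>auto intro: continuous_on_subset\<close>)
  moreover have "at r within {0..r+1} = at r"
    using r by (intro at_within_interior) auto
  ultimately show ?thesis unfolding Phi_def[abs_def] by simp
qed

lemma Phi_nonneg: "r \<ge> 0 \<Longrightarrow> Phi r \<ge> 0"
  unfolding Phi_def using rho_pos rho_integrable by (intro integral_nonneg) (auto intro: less_imp_le)

lemma Phi_mono: assumes "0 \<le> r" "r \<le> r'" shows "Phi r \<le> Phi r'"
proof -
  have "integral {0..r} rho \<le> integral {0..r'} rho"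
    using assms rho_pos rho_integrable
    by (intro integral_subset_le) (auto intro: less_imp_le)
  thus ?thesis unfolding Phi_def .
qed

lemma Phi_unbounded: "\<exists>r\<ge>0. Phi r > c"
proof (rule ccontr)
  assume "\<not> ?thesis"
  hence B: "\<And>r. r \<ge> 0 \<Longrightarrow> Phi r \<le> c" by (simp add: not_less)
  have inc: "incseq (\<lambda>i::nat. Phi (real i))" by (rule incseq_SucI) (simp add: Phi_mono)
  have "\<forall>i. Phi (real i) \<le> c" using B by simp
  then obtain L where L: "(\<lambda>i::nat. Phi (real i)) \<longlonglongrightarrow> L" using incseq_convergent[OF inc] by blast
  have si: "set_integrable lborel {0..real i} rho" for i
    unfolding set_integrable_def
    by (rule borel_integrable_compact) (auto intro: continuous_on_subset[OF continuous_on_rho])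
  have "set_integrable lborel (\<Union>i::nat. {0..real i}) rho"
  proof (rule pos_integrable_to_top)
    show "mono (\<lambda>i::nat. {0..real i})" by (auto simp: mono_def)
    show "\<And>x i. x \<in> {0..real i} \<Longrightarrow> 0 \<le> rho x" using rho_pos by (auto intro: less_imp_le)
    show "\<And>i. set_integrable lborel {0..real i} rho" by (rule si)
    have "(LINT x:{0..real i}|lborel. rho x) = Phi (real i)" for i
      using set_borel_integral_eq_integral(2)[OF si] unfolding Phi_def by simp
    thus "(\<lambda>i. LINT x:{0..real i}|lborel. rho x) \<longlonglongrightarrow> L" using L by simp
  qed auto
  moreover have "(\<Union>i::nat. {0..real i}) = {0..}"
    by (auto simp: real_arch_simple)
  ultimately have "set_integrable lborel {0..} rho" by simp
  thus False using G_nonint unfolding rho_def[abs_def] by simp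
qed

definition Psi :: "real \<Rightarrow> real" where "Psi s = Phi (sqrt s)"
definition Psi' :: "real \<Rightarrow> real" where "Psi' s = rho (sqrt s) / (2 * sqrt s)"
definition Psi'' :: "real \<Rightarrow> real" where
  "Psi'' s = rho' (sqrt s) / (4 * s) - rho (sqrt s) / (4 * s * sqrt s)"

lemma Psi_deriv: "s > 0 \<Longrightarrow> (Psi has_real_derivative Psi' s) (at s)"
proof -
  assume s: "s > 0"
  have "((\<lambda>x. Phi (sqrt x)) has_real_derivative rho (sqrt s) * (inverse (sqrt s) / 2)) (at s)"
    using DERIV_chain2[OF Phi_deriv DERIV_real_sqrt[OF s]] s by simp
  moreover have "rho (sqrt s) * (inverse (sqrt s) / 2) = Psi' s" unfolding Psi'_def by (simp add: field_simps)
  ultimately show ?thesis unfolding Psi_def[abs_def] by simp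
qed

lemma Psi'_deriv: "s > 0 \<Longrightarrow> (Psi' has_real_derivative Psi'' s) (at s)"
proof -
  assume s: "s > 0"
  have sq: "sqrt s > 0" using s by simp
  have g1: "((\<lambda>x. rho (sqrt x)) has_real_derivative rho' (sqrt s) * (inverse (sqrt s) / 2)) (at s)"
    using DERIV_chain2[OF rho_deriv[OF sq] DERIV_real_sqrt[OF s]] .
  have g2: "((\<lambda>x. 2 * sqrt x) has_real_derivative 2 * (inverse (sqrt s) / 2)) (at s)"
    using DERIV_cmult[OF DERIV_real_sqrt[OF s], of 2] .
  have "((\<lambda>x. rho (sqrt x) / (2 * sqrt x)) has_real_derivative
      (rho' (sqrt s) * (inverse (sqrt s) / 2) * (2 * sqrt s) - rho (sqrt s) * (2 * (inverse (sqrt s) / 2))) / (2 * sqrt s * (2 * sqrt s))) (at s)"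
    by (rule DERIV_divide[OF g1 g2]) (use sq in simp)
  moreover have "(rho' (sqrt s) * (inverse (sqrt s) / 2) * (2 * sqrt s) - rho (sqrt s) * (2 * (inverse (sqrt s) / 2))) / (2 * sqrt s * (2 * sqrt s)) = Psi'' s"
  proof -
    have ss: "sqrt s * sqrt s = s" using s by simp
    show ?thesis unfolding Psi''_def using sq s ss by (simp add: field_simps)
  qed
  ultimately show ?thesis unfolding Psi'_def[abs_def] by simp
qed

lemma continuous_on_Psi'': "continuous_on {0<..} Psi''"
proof -
  have "isCont Psi'' s" if s: "s > 0" for s
  proof -
    have sq: "sqrt s > 0" using s by simp
    have c1: "isCont (\<lambda>x. rho' (sqrt x)) s" by (rule continuous_at_compose[OF DERIV_isCont[OF DERIV_real_sqrt[OF s]] isCont_rho'[OF sq], unfolded o_def])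
    have c2: "isCont (\<lambda>x. rho (sqrt x)) s" by (rule continuous_at_compose[OF DERIV_isCont[OF DERIV_real_sqrt[OF s]] DERIV_isCont[OF rho_deriv[OF sq]], unfolded o_def])
    show ?thesis unfolding Psi''_def[abs_def] using s sq
      by (intro continuous_intros c1 c2) auto
  qed
  thus ?thesis by (intro continuous_at_imp_continuous_on) auto
qed

lemma Psi''_nonpos:
  assumes "s > 0"
  shows "Psi'' s \<le> 0"
proof -
  have "rho' (sqrt s) / (4 * s) \<le> 0" using rho'_nonpos[of "sqrt s"] assms by (simp add: divide_nonpos_pos)
  moreover have "rho (sqrt s) / (4 * s * sqrt s) \<ge> 0" using rho_pos[of "sqrt s"] assms by simp
  ultimately show ?thesis unfolding Psi''_def by linarith
qed

lemma Psi'_pos: "s > 0 \<Longrightarrow> Psi' s > 0"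
  unfolding Psi'_def using rho_pos[of "sqrt s"] by simp

lemma Psi_nonneg: "s \<ge> 0 \<Longrightarrow> Psi s \<ge> 0"
  unfolding Psi_def by (rule Phi_nonneg) simp

lemma Psi_unbounded: "\<exists>s\<ge>1. Psi s > c"
proof -
  obtain r where r: "r \<ge> 0" "Phi r > c" using Phi_unbounded by blast
  define r' where "r' = max r 1"
  have "Phi r' > c" using Phi_mono[of r r'] r by (simp add: r'_def)
  moreover have "sqrt (r'^2) = r'" by (simp add: r'_def)
  ultimately have "Psi (r'^2) > c" unfolding Psi_def by simp
  moreover have "r'^2 \<ge> 1" by (simp add: r'_def)
  ultimately show ?thesis by blast
qed

lemma Psi_mono: "0 \<le> s \<Longrightarrow> s \<le> s' \<Longrightarrow> Psi s \<le> Psi s'"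
  unfolding Psi_def by (intro Phi_mono) auto

lemma Psi'_sq: "s > 0 \<Longrightarrow> 4 * s * (Psi' s)^2 = 1 / G (sqrt s)"
  unfolding Psi'_def rho_def using G_pos[of "sqrt s"] by (simp add: field_simps power2_eq_square)

lemma Psi'_mult_sqrt: "s > 0 \<Longrightarrow> Psi' s * (2 * sqrt s) = rho (sqrt s)"
  unfolding Psi'_def by simp

lemma Psi'_grad_bound:
  fixes x :: "real^3"
  shows "4 * (x \<bullet> x) * (Psi' (1 + x \<bullet> x))^2 \<le> 1 / G 0"
proof -
  let ?s = "1 + x \<bullet> x"
  have s: "?s > 0" "sqrt ?s \<ge> 0" by (simp_all add: add_pos_nonneg)
  have "4 * (x \<bullet> x) * (Psi' ?s)^2 \<le> 4 * ?s * (Psi' ?s)^2" by (simp add: mult_right_mono)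
  also have "\<dots> = 1 / G (sqrt ?s)" using Psi'_sq[OF s(1)] .
  also have "\<dots> \<le> 1 / G 0" using G_ge_G0[OF s(2)] G0 by (simp add: frac_le)
  finally show ?thesis .
qed

lemma Psi'_drift_bound:
  fixes x e :: "real^3"
  assumes e: "norm e \<le> 1" and M: "M \<ge> 0" and c: "\<bar>c\<bar> \<le> M * sqrt (G (norm x))"
  shows "Psi' (1 + x \<bullet> x) * (4 + 2 * c * (x \<bullet> e)) \<le> 2 / sqrt (G 0) + M"
proof -
  let ?s = "1 + x \<bullet> x"
  have s: "?s > 0" "sqrt ?s \<ge> 1" "norm x \<le> sqrt ?s" by (simp_all add: add_pos_nonneg norm_eq_sqrt_inner)
  have G: "G (sqrt ?s) > 0" "G 0 \<le> G (sqrt ?s)" using G_pos G_ge_G0 s(2) by simp_all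
  have k: "Psi' ?s > 0" using Psi'_pos[OF s(1)] .
  have "\<bar>x \<bullet> e\<bar> \<le> norm x * norm e" by (rule Cauchy_Schwarz_ineq2)
  also have "\<dots> \<le> sqrt ?s" using s(3) mult_left_le[OF e norm_ge_zero[of x]] by linarith
  finally have xe: "\<bar>x \<bullet> e\<bar> \<le> sqrt ?s" .
  have "c * (x \<bullet> e) \<le> \<bar>c\<bar> * \<bar>x \<bullet> e\<bar>" by (metis abs_ge_self abs_mult)
  also have "\<dots> \<le> \<bar>c\<bar> * sqrt ?s" using xe by (simp add: mult_left_mono)
  finally have "Psi' ?s * (4 + 2 * c * (x \<bullet> e)) \<le> 4 * Psi' ?s + \<bar>c\<bar> * (Psi' ?s * (2 * sqrt ?s))"
    using k by (simp add: algebra_simps mult_left_mono)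
  also have "\<bar>c\<bar> * (Psi' ?s * (2 * sqrt ?s)) \<le> M"
  proof -
    have "sqrt (G (norm x)) \<le> sqrt (G (sqrt ?s))" using G_le_mono[OF norm_ge_zero s(3)] by simp
    hence "\<bar>c\<bar> \<le> M * sqrt (G (sqrt ?s))" using c mult_left_mono[OF _ M] order_trans by blast
    thus ?thesis unfolding Psi'_mult_sqrt[OF s(1)] rho_def using G(1) by (simp add: divide_le_eq)
  qed
  also have "4 * Psi' ?s \<le> 2 / sqrt (G 0)"
  proof -
    have "4 * Psi' ?s = 2 * rho (sqrt ?s) / sqrt ?s" unfolding Psi'_def by simp
    also have "\<dots> \<le> 2 * rho (sqrt ?s)" using s(1,2) rho_pos[of "sqrt ?s"] by (simp add: divide_le_eq)
    also have "\<dots> \<le> 2 / sqrt (G 0)" unfolding rho_def using G G0 by (simp add: frac_le)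
    finally show ?thesis .
  qed
  finally show ?thesis by simp
qed

lemma growth_bound_everywhere:
  fixes h :: "'a::topological_space \<Rightarrow> real" and F :: "'a \<Rightarrow> real^3"
  assumes hc: "continuous_on UNIV h" and K: "compact K" and B: "B \<ge> 0"
    and outside: "\<forall>p. p \<notin> K \<longrightarrow> \<bar>h p\<bar> \<le> B * sqrt (G (norm (F p)))"
  obtains M where "M \<ge> 0" "\<And>p. \<bar>h p\<bar> \<le> M * sqrt (G (norm (F p)))"
proof -
  obtain C where C: "\<forall>p\<in>K. \<bar>h p\<bar> \<le> C"
    using compact_imp_bounded[OF compact_continuous_image[OF continuous_on_subset[OF hc] K]]
    unfolding bounded_iff by auto
  define M where "M = max B (C / sqrt (G 0))"
  have "\<bar>h p\<bar> \<le> M * sqrt (G (norm (F p)))" for p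
  proof (cases "p \<in> K")
    case True
    have "\<bar>h p\<bar> \<le> (C / sqrt (G 0)) * sqrt (G 0)" using C True G0 by simp
    also have "\<dots> \<le> M * sqrt (G (norm (F p)))"
      unfolding M_def using G_ge_G0[of "norm (F p)"] G0 B by (intro mult_mono) auto
    finally show ?thesis .
  next
    case False
    thus ?thesis using outside G_pos[of "norm (F p)"] unfolding M_def
      by (meson max.cobounded1 mult_right_mono order_trans real_sqrt_ge_zero less_imp_le norm_ge_zero)
  qed
  moreover have "M \<ge> 0" using B unfolding M_def by simp
  ultimately show ?thesis using that by blast
qed

lemma continuous_on_Psi_norm_sq:
  assumes "continuous_on UNIV F"
  shows "continuous_on UNIV (\<lambda>p. Psi (1 + F p \<bullet> F p))"
proof -
  have "continuous_on {0<..} Psi"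
    using DERIV_isCont[OF Psi_deriv] by (intro continuous_at_imp_continuous_on) auto
  thus ?thesis
    by (rule continuous_on_compose2) (intro continuous_intros assms, auto simp: add_pos_nonneg)
qed

lemma compact_superlevel_penalized:
  fixes F :: "'a::t2_space \<Rightarrow> real^3"
  assumes proper: "\<forall>K. compact K \<longrightarrow> compact (F -` K)"
    and Fc: "continuous_on UNIV F" and uc: "continuous_on UNIV u"
    and S: "\<And>p. u p \<le> S" and eps: "\<epsilon> > 0"
  shows "compact {p. c \<le> u p - \<epsilon> * Psi (1 + F p \<bullet> F p)}"
proof -
  let ?L = "{p. c \<le> u p - \<epsilon> * Psi (1 + F p \<bullet> F p)}"
  obtain \<sigma> where \<sigma>: "\<sigma> \<ge> 1" "Psi \<sigma> > (S - c) / \<epsilon>" using Psi_unbounded by blast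
  have "?L \<subseteq> F -` cball 0 (sqrt \<sigma>)"
  proof
    fix p assume "p \<in> ?L"
    hence "Psi (1 + F p \<bullet> F p) \<le> (S - c) / \<epsilon>" using S[of p] eps by (simp add: field_simps)
    hence "1 + F p \<bullet> F p < \<sigma>" using Psi_mono[of \<sigma> "1 + F p \<bullet> F p"] \<sigma> by fastforce
    hence "norm (F p) ^ 2 \<le> \<sigma>" by (simp add: power2_norm_eq_inner)
    thus "p \<in> F -` cball 0 (sqrt \<sigma>)" by (simp add: real_le_rsqrt)
  qed
  moreover have "closed ?L"
    by (intro closed_Collect_le continuous_intros uc continuous_on_Psi_norm_sq[OF Fc])
  ultimately show ?thesis
    using compact_Int_closed[of "F -` cball 0 (sqrt \<sigma>)" ?L] proper by (simp add: Int_absorb1)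
qed

lemma exists_max_penalized:
  fixes F :: "'a::{t2_space,second_countable_topology} \<Rightarrow> real^3"
  assumes surf: "oriented_immersed_surface F A" and proper: "\<forall>K. compact K \<longrightarrow> compact (F -` K)"
    and Cu: "C2_surface A u" and S: "\<And>p. u p \<le> S" and eps: "\<epsilon> > 0"
  obtains q where "\<And>p. u p - \<epsilon> * Psi (1 + F p \<bullet> F p) \<le> u q - \<epsilon> * Psi (1 + F q \<bullet> F q)"
proof -
  define w where "w = (\<lambda>p. u p - \<epsilon> * Psi (1 + F p \<bullet> F p))"
  have Fc: "continuous_on UNIV F" by (rule continuous_on_immersion[OF surf])
  have "continuous_on UNIV w" unfolding w_def
    by (intro continuous_intros continuous_on_C2_surface[OF surf Cu] continuous_on_Psi_norm_sq[OF Fc])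
  moreover have "compact {p. w q0 \<le> w p}" for q0 unfolding w_def
    by (rule compact_superlevel_penalized[OF proper Fc continuous_on_C2_surface[OF surf Cu] S eps])
  ultimately obtain q where "\<And>p. w p \<le> w q" using continuous_attains_max_of_compact_superlevel by blast
  thus ?thesis using that unfolding w_def by blast
qed

lemma max_point_estimates:
  fixes F :: "'a::{t2_space,second_countable_topology} \<Rightarrow> real^3"
  assumes surf: "oriented_immersed_surface F A" and minimal: "phi_minimal \<phi> F A"
    and phi: "smooth_real \<phi>" and Cu: "C2_surface A u" and eps: "\<epsilon> > 0"
    and M: "M \<ge> 0" "\<bar>deriv \<phi> (height F q)\<bar> \<le> M * sqrt (G (norm (F q)))"
    and qmax: "\<And>p. u p - \<epsilon> * Psi (1 + F p \<bullet> F p) \<le> u q - \<epsilon> * Psi (1 + F q \<bullet> F q)"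
  shows "grad_norm F A u q \<le> \<epsilon> / sqrt (G 0)"
    and "phi_laplacian \<phi> F A u q \<le> \<epsilon> * (2 / sqrt (G 0) + M)"
proof -
  define \<psi> U z where "\<psi> = fst (chart_at A q)" and "U = snd (chart_at A q)" and "z = coord_at A q"
  define X f where "X = F \<circ> \<psi>" and "f = u \<circ> \<psi>"
  have chart: "(\<psi>, U) \<in> A" "z \<in> U" "\<psi> z = q"
    using chart_at_in_atlas(1)[OF surf, of q] coord_at_in_chart[OF surf, of q]
    unfolding \<psi>_def U_def z_def by simp_all
  have Xz: "X z = F q" unfolding X_def using chart(3) by simp
  have "\<forall>v\<in>U. f v - \<epsilon> * Psi (1 + X v \<bullet> X v) \<le> f z - \<epsilon> * Psi (1 + X z \<bullet> X z)"
    unfolding f_def X_def using qmax chart(3) by simp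
  note E = chart_estimates[OF atlas_chart(1)[OF surf chart(1)] chart(2)
      Cinf_imp_Ck2[OF atlas_chart(4)[OF surf chart(1)], folded X_def]
      atlas_chart(5)[OF surf chart(1), rule_format, OF chart(2), folded X_def]
      _ Psi_deriv Psi'_deriv continuous_on_Psi'' Psi''_nonpos _ this
      phi_minimal_chart[OF surf minimal, of q, folded \<psi>_def X_def z_def] smooth_real_DERIV[OF phi]]
  have Cf: "Ck 2 U f" using Cu chart(1) unfolding C2_surface_def f_def by auto
  have E1: "grad_inner_loc X f f z \<le> (\<epsilon> * Psi' (1 + X z \<bullet> X z))^2 * (4 * (X z \<bullet> X z))"
    by (rule E(1)[OF Cf]) (use eps in \<open>simp_all add: add_pos_nonneg\<close>)
  have E2: "lap_loc X f z + grad_inner_loc X (\<lambda>w. \<phi> (X w \<bullet> e3)) f z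
      \<le> \<epsilon> * Psi' (1 + X z \<bullet> X z) * (4 + 2 * deriv \<phi> (X z \<bullet> e3) * (X z \<bullet> e3))"
    by (rule E(2)[OF Cf]) (use eps in \<open>simp_all add: add_pos_nonneg\<close>)
  have "grad_norm F A u q = sqrt (grad_inner_loc X f f z)"
    unfolding grad_norm_def grad_inner_def X_def f_def \<psi>_def z_def ..
  also have "\<dots> \<le> sqrt ((\<epsilon> / sqrt (G 0))^2)"
  proof (rule real_sqrt_le_mono)
    have "grad_inner_loc X f f z \<le> \<epsilon>^2 * (4 * (X z \<bullet> X z) * (Psi' (1 + X z \<bullet> X z))^2)"
      using E1 by (simp add: algebra_simps)
    also have "\<dots> \<le> \<epsilon>^2 * (1 / G 0)" by (intro mult_left_mono Psi'_grad_bound) simp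
    finally show "grad_inner_loc X f f z \<le> (\<epsilon> / sqrt (G 0))^2" using G0 by (simp add: power_divide)
  qed
  finally show "grad_norm F A u q \<le> \<epsilon> / sqrt (G 0)" using eps G0 by simp
  have "phi_laplacian \<phi> F A u q = lap_loc X f z + grad_inner_loc X (\<lambda>w. \<phi> (X w \<bullet> e3)) f z"
    unfolding phi_laplacian_def laplacian_def grad_inner_def height_def X_def f_def \<psi>_def z_def
    by (simp add: o_def)
  also have "\<dots> \<le> \<epsilon> * (Psi' (1 + X z \<bullet> X z) * (4 + 2 * deriv \<phi> (X z \<bullet> e3) * (X z \<bullet> e3)))"
    using E2 by (simp add: mult.assoc)
  also have "\<dots> \<le> \<epsilon> * (2 / sqrt (G 0) + M)"
    using Psi'_drift_bound[OF _ M(1), of e3 "deriv \<phi> (X z \<bullet> e3)" "X z"] M(2) eps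
    unfolding Xz height_def e3_def by (simp add: mult_left_mono)
  finally show "phi_laplacian \<phi> F A u q \<le> \<epsilon> * (2 / sqrt (G 0) + M)" .
qed

lemma omori_yau_approx:
  fixes F :: "'a::{t2_space,second_countable_topology} \<Rightarrow> real^3"
  assumes phi: "smooth_real \<phi>" and surf: "oriented_immersed_surface F A"
    and proper: "\<forall>K. compact K \<longrightarrow> compact (F -` K)" and minimal: "phi_minimal \<phi> F A"
    and B: "B \<ge> 0"
    and bound: "\<exists>K. compact K \<and> (\<forall>p. p \<notin> K \<longrightarrow> \<bar>deriv \<phi> (height F p)\<bar> \<le> B * sqrt (G (norm (F p))))"
    and Cu: "C2_surface A u" and bdd: "bdd_above (range u)" and eta: "\<eta> > 0"
  shows "\<exists>q. u q > (SUP q. u q) - \<eta> \<and> grad_norm F A u q < \<eta> \<and> phi_laplacian \<phi> F A u q < \<eta>"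
proof -
  have Fc: "continuous_on UNIV F" by (rule continuous_on_immersion[OF surf])
  have "continuous_on UNIV (\<lambda>p. deriv \<phi> (height F p))" unfolding height_def
    by (rule continuous_on_compose2[OF smooth_real_continuous_deriv[OF phi]]) (intro continuous_intros Fc, auto)
  then obtain M where M: "M \<ge> 0" "\<And>p. \<bar>deriv \<phi> (height F p)\<bar> \<le> M * sqrt (G (norm (F p)))"
    using bound growth_bound_everywhere[OF _ _ B] by metis
  define S where "S = (SUP q. u q)"
  have uS: "u p \<le> S" for p unfolding S_def using bdd by (intro cSUP_upper) auto
  obtain p0 where p0: "u p0 > S - \<eta>/2"
    using less_cSUP_iff[of UNIV u "S - \<eta>/2"] bdd eta unfolding S_def by auto
  define C where "C = Psi (1 + F p0 \<bullet> F p0) + 2 / sqrt (G 0) + M + 1"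
  define \<epsilon> where "\<epsilon> = \<eta> / (2 * C)"
  have Psi0: "Psi (1 + F p0 \<bullet> F p0) \<ge> 0" by (rule Psi_nonneg) simp
  have C: "C > 0" unfolding C_def using Psi0 M(1) G0 by (simp add: add_nonneg_pos)
  have eps: "\<epsilon> > 0" unfolding \<epsilon>_def using eta C by simp
  have small: "\<epsilon> * r < \<eta> / 2" if "0 \<le> r" "r < C" for r
  proof -
    have "\<epsilon> * r = \<eta> / 2 * (r / C)" unfolding \<epsilon>_def by simp
    also have "\<dots> < \<eta> / 2 * 1" using that C eta by (intro mult_strict_left_mono) auto
    finally show ?thesis by simp
  qed
  obtain q where qmax: "\<And>p. u p - \<epsilon> * Psi (1 + F p \<bullet> F p) \<le> u q - \<epsilon> * Psi (1 + F q \<bullet> F q)"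
    using exists_max_penalized[OF surf proper Cu uS eps] by blast
  note est = max_point_estimates[OF surf minimal phi Cu eps M(1) M(2)[of q] qmax]
  have "\<epsilon> * Psi (1 + F q \<bullet> F q) \<ge> 0" using eps Psi_nonneg[of "1 + F q \<bullet> F q"] by simp
  hence uq: "u q \<ge> u p0 - \<epsilon> * Psi (1 + F p0 \<bullet> F p0)" using qmax[of p0] by linarith
  have g: "0 < 1 / sqrt (G 0)" "2 / sqrt (G 0) = 2 * (1 / sqrt (G 0))" using G0 by simp_all
  have lt: "Psi (1 + F p0 \<bullet> F p0) < C" "1 / sqrt (G 0) < C" "2 / sqrt (G 0) + M < C"
    unfolding C_def using Psi0 M(1) g by linarith+
  have "u q > S - \<eta>" using uq p0 small[OF Psi0 lt(1)] by linarith
  moreover have "grad_norm F A u q < \<eta>"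
  proof -
    have "\<epsilon> * (1 / sqrt (G 0)) < \<eta> / 2" by (rule small[OF less_imp_le[OF g(1)] lt(2)])
    moreover have "\<epsilon> / sqrt (G 0) = \<epsilon> * (1 / sqrt (G 0))" by simp
    ultimately show ?thesis using est(1) eta by linarith
  qed
  moreover have "phi_laplacian \<phi> F A u q < \<eta>"
  proof -
    have "\<epsilon> * (2 / sqrt (G 0) + M) < \<eta> / 2" using g M(1) by (intro small lt(3)) simp
    thus ?thesis using est(2) eta by linarith
  qed
  ultimately show ?thesis unfolding S_def by blast
qed

end

theorem corollary2p7:
  fixes \<phi> :: "real \<Rightarrow> real"
    and F :: "'a::{t2_space,second_countable_topology} \<Rightarrow> real^3"
    and A :: "((real \<times> real \<Rightarrow> 'a) \<times> (real \<times> real) set) set"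
    and B :: real
    and G :: "real \<Rightarrow> real"
    and DG :: "nat \<Rightarrow> real \<Rightarrow> real"
  assumes phi_smooth: "smooth_real \<phi>"
    and surf: "oriented_immersed_surface F A"
    and conn: "connected (UNIV :: 'a set)"
    and proper: "\<forall>K. compact K \<longrightarrow> compact (F -` K)"
    and minimal: "phi_minimal \<phi> F A"
    and B_pos: "B > 0"
    and G_smooth: "smooth_on_halfline G DG"
    and G0: "G 0 > 0"
    and G_mono: "\<forall>t\<ge>0. DG 1 t \<ge> 0"
    and G_nonint: "\<not> set_integrable lborel {0::real..} (\<lambda>t. 1 / sqrt (G t))"
    and G_limsup: "Limsup at_top (\<lambda>t. ereal (t * G (sqrt t) / G t)) < \<infinity>"
    and bound: "\<exists>K. compact K \<and>
       (\<forall>p. p \<notin> K \<longrightarrow> \<bar>deriv \<phi> (height F p)\<bar> \<le> B * sqrt (G (norm (F p))))"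
  shows "omori_yau_phi \<phi> F A \<and> phi_stochastically_complete \<phi> F A"
proof -
  interpret admissible_growth G DG using G_smooth G0 G_mono G_nonint by unfold_locales
  have "omori_yau_phi \<phi> F A"
    unfolding omori_yau_phi_def
  proof (intro allI impI)
    fix u :: "'a \<Rightarrow> real" assume u: "C2_surface A u \<and> bdd_above (range u)"
    have "\<forall>n::nat. \<exists>q. n \<ge> 1 \<longrightarrow> u q > (SUP q. u q) - 1 / real n \<and>
        grad_norm F A u q < 1 / real n \<and> phi_laplacian \<phi> F A u q < 1 / real n"
      using omori_yau_approx[OF phi_smooth surf proper minimal less_imp_le[OF B_pos] bound] u by simp
    thus "\<exists>p :: nat \<Rightarrow> 'a. \<forall>n::nat. n \<ge> 1 \<longrightarrow> u (p n) > (SUP q. u q) - 1 / real n \<and>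
        grad_norm F A u (p n) < 1 / real n \<and> phi_laplacian \<phi> F A u (p n) < 1 / real n"
      by metis
  qed
  moreover from this have "phi_stochastically_complete \<phi> F A"
    unfolding omori_yau_phi_def phi_stochastically_complete_def by blast
  ultimately show ?thesis ..
qed

end
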